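(* Let $\nu\in\mathcal D$ and $s>0$. The map $\mu\mapsto\nu\circledast(s,\mu)$ is continuous from $(\mathcal D_0,d_0)$ to $(\mathcal D,d_S)$.
   Context: $\mathcal M_f(\mathbb R_+)$ is the space of finite measures on $\mathbb R_+$ with the weak topology, metrized by the bounded Lipschitz distance $d_{BL}(\mu,\nu)=\sup|\langle\mu,f\rangle-\langle\nu,f\rangle|$ over $f:\mathbb R_+\to\mathbb R$ with $\sup|f|+\mathrm{Lip}(f)\le1$. $\mathcal D$ is the space of càdlàg paths $\mathbb R_+\to\mathcal M_f(\mathbb R_+)$ with the Skorokhod $J_1$ topology and associated Skorokhod distance $d_S$ (built on $d_{BL}$). For $\mu\in\mathcal D$, $\sigma(\mu)=\inf\{t>0:\mu(t+\cdot)\equiv0\}$. $\mathcal D_0=\{\mu\in\mathcal D:\sigma(\mu)<\infty,\ \mu_t\ne0$ for $0<t<\sigma(\mu)$, and $\mu_{\sigma(\mu)-}=0$ if $\sigma(\mu)>0\}$, with distance $d_0(\mu,\nu)=d_S(\mu,\nu)+|\sigma(\mu)-\sigma(\nu)|$. Grafting. For a finite measure $\mu$, $H(\mu)=\sup\operatorname{supp}\mu$ ($H(0)=0$); $[\mu,\nu]$ is defined by $\langle[\mu,\nu],f\rangle=\langle\mu,f\rangle+\langle\nu,f(H(\mu)+\cdot)\rangle$. For $\nu\in\mathcal D$, $\mu$ with finite lifetime $\sigma'$ and $s\ge0$, $\nu\circledast(s,\mu)$ is the path equal to $\nu(t)$ for $t<s$, $[\nu(s),\mu(t-s)]$ for $s\le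 t<s+\sigma'$, and $\nu(t-\sigma')$ for $t\ge s+\sigma'$ (if $\nu$ has finite lifetime $\le s$, it equals $\nu$). *)

theory Defs
  imports "HOL-Analysis.Analysis"
begin

text \<open>A finite measure on R_+ is represented as a finite Borel measure on the reals
  that gives no mass to the negative half-line.\<close>

definition MF :: "real measure set" where
  "MF = {M. sets M = sets borel \<and> finite_measure M \<and> emeasure M {..<0} = 0}"

definition zeroM :: "real measure" where
  "zeroM = null_measure borel"

text \<open>Test functions for the bounded Lipschitz distance: sup|f| + Lip(f) \<le> 1.
  (Functions on R_+ with this property extend to R via f(max 0 x) with the same
  constants, and integrals only see R_+, so quantifying over functions on R is
  equivalent.)\<close>

definition BL1 :: "(real \<Rightarrow> real) set" where
  "BL1 = {f. \<exists>B L. B \<ge> 0 \<and> L \<ge> 0 \<and> B + L \<le> 1 \<and> (\<forall>x. \<bar>f x\<bar> \<le> B)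
               \<and> (\<forall>x y. \<bar>f x - f y\<bar> \<le> L * \<bar>x - y\<bar>)}"

definition dBL :: "real measure \<Rightarrow> real measure \<Rightarrow> real" where
  "dBL M N = Sup {\<bar>(\<integral>x. f x \<partial>M) - (\<integral>x. f x \<partial>N)\<bar> | f. f \<in> BL1}"

text \<open>Paths are functions real \<Rightarrow> real measure; only times t \<ge> 0 matter.\<close>

definition cadlag :: "(real \<Rightarrow> real measure) set" where
  "cadlag = {mu. (\<forall>t\<ge>0. mu t \<in> MF)
     \<and> (\<forall>t\<ge>0. \<forall>e>0. \<exists>d>0. \<forall>r. t \<le> r \<and> r < t + d \<longrightarrow> dBL (mu r) (mu t) < e)
     \<and> (\<forall>t>0. \<exists>m\<in>MF. \<forall>e>0. \<exists>d>0. \<forall>r. t - d < r \<and> r < t \<longrightarrow> dBL (mu r) m < e)}"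

definition gammaL :: "(real \<Rightarrow> real) \<Rightarrow> real" where
  "gammaL l = Sup {\<bar>ln ((l s - l t) / (s - t))\<bar> | s t. 0 \<le> t \<and> t < s}"

definition LamSet :: "(real \<Rightarrow> real) set" where
  "LamSet = {l. strict_mono_on {0..} l \<and> l ` {0..} = {0..}
     \<and> (\<exists>C. \<forall>s t. 0 \<le> t \<and> t < s \<longrightarrow> \<bar>ln ((l s - l t) / (s - t))\<bar> \<le> C)}"

definition dSu :: "(real \<Rightarrow> real measure) \<Rightarrow> (real \<Rightarrow> real measure) \<Rightarrow> (real \<Rightarrow> real) \<Rightarrow> real \<Rightarrow> real" where
  "dSu x y l u = Sup {min 1 (dBL (x (min t u)) (y (min (l t) u))) | t. 0 \<le> t}"

text \<open>Skorokhod J1 metric on D([0,\<infinity>), M_f) (Ethier--Kurtz, Ch. 3, (5.2)).\<close>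

definition dS :: "(real \<Rightarrow> real measure) \<Rightarrow> (real \<Rightarrow> real measure) \<Rightarrow> real" where
  "dS x y = Inf {max (gammaL l)
        (enn2real (\<integral>\<^sup>+ u. indicator {0..} u * ennreal (exp (- u) * dSu x y l u) \<partial>lborel))
      | l. l \<in> LamSet}"

definition deadset :: "(real \<Rightarrow> real measure) \<Rightarrow> real set" where
  "deadset mu = {t. t > 0 \<and> (\<forall>r\<ge>0. mu (t + r) = zeroM)}"

definition lifetime :: "(real \<Rightarrow> real measure) \<Rightarrow> real" where
  "lifetime mu = Inf (deadset mu)"

definition D0 :: "(real \<Rightarrow> real measure) set" where
  "D0 = {mu. mu \<in> cadlag \<and> deadset mu \<noteq> {}
     \<and> (\<forall>t. 0 < t \<and> t < lifetime mu \<longrightarrow> mu t \<noteq> zeroM)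
     \<and> (lifetime mu > 0 \<longrightarrow>
          (\<forall>e>0. \<exists>d>0. \<forall>t. lifetime mu - d < t \<and> t < lifetime mu \<longrightarrow> dBL (mu t) zeroM < e))}"

definition d0 :: "(real \<Rightarrow> real measure) \<Rightarrow> (real \<Rightarrow> real measure) \<Rightarrow> real" where
  "d0 x y = dS x y + \<bar>lifetime x - lifetime y\<bar>"

definition supp :: "real measure \<Rightarrow> real set" where
  "supp M = {x. \<forall>e>0. emeasure M (ball x e) > 0}"

text \<open>H(mu) = sup supp mu, with H(0) = 0 (support lies in R_+).  Convention for
  unbounded support (where the paper's H is +\<infinity> and grafting is undefined): H = 0.\<close>
definition Hgt :: "real measure \<Rightarrow> real" where
  "Hgt M = (if bdd_above (supp M) then Sup (insert 0 (supp M)) else 0)"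

definition graftM :: "real measure \<Rightarrow> real measure \<Rightarrow> real measure" where
  "graftM M N = measure_of UNIV (sets borel)
     (\<lambda>A. emeasure M A + emeasure (distr N borel (\<lambda>x. Hgt M + x)) A)"

definition graft :: "(real \<Rightarrow> real measure) \<Rightarrow> real \<Rightarrow> (real \<Rightarrow> real measure) \<Rightarrow> (real \<Rightarrow> real measure)" where
  "graft nu s mu = (if deadset nu \<noteq> {} \<and> lifetime nu \<le> s then nu
     else (\<lambda>t. if t < s then nu t
               else if t < s + lifetime mu then graftM (nu s) (mu (t - s))
               else nu (t - lifetime mu)))"

end

theory Submission
  imports Defs
begin

text \<open>A small value of d0 between mu' and mu yields a time change l with small slope distortion,
  nearly equal lifetimes, and mu' r uniformly close to mu (l r): both paths vanish after their
  lifetimes, so the integral in the Skorokhod distance controls every time.  This l is extended to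
  a time change of the grafted paths: the identity before s, l on [s, s + a] with a slightly
  before the end of the excursion, a linear bridge absorbing the difference of the lifetimes on a
  stretch where both grafted paths are close to nu s (the excursions have nearly died out and nu
  is right continuous at s), and a shift afterwards.  Uniform closeness along a time change that is
  close to the identity gives a small Skorokhod distance, by cutting [0, T] into finitely many
  pieces on which the unperturbed grafted path oscillates little.\<close>

section \<open>The bounded Lipschitz distance\<close>

lemma MFD:
  assumes "M \<in> MF"
  shows "sets M = sets borel" "finite_measure M" "emeasure M {..<0} = 0" "space M = UNIV"
  using assms sets_eq_imp_space_eq[of M borel] unfolding MF_def by auto

lemma measurable_MF_borel: "M \<in> MF \<Longrightarrow> f \<in> borel_measurable borel \<Longrightarrow> f \<in> borel_measurable M"
  using measurable_cong_sets[OF MFD(1) refl] by blast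

lemma zeroM_in_MF: "zeroM \<in> MF"
  unfolding MF_def zeroM_def by (auto intro!: finite_measureI simp: emeasure_null_measure)

lemma integral_zeroM [simp]: "(\<integral>x. f x \<partial>zeroM) = 0"
  unfolding zeroM_def by simp

lemma BL1D:
  assumes "f \<in> BL1"
  shows "\<bar>f x\<bar> \<le> 1" "f \<in> borel_measurable borel"
proof -
  obtain B L where BL: "B \<ge> 0" "L \<ge> 0" "B + L \<le> 1" "\<forall>x. \<bar>f x\<bar> \<le> B"
     "\<forall>x y. \<bar>f x - f y\<bar> \<le> L * \<bar>x - y\<bar>" using assms unfolding BL1_def by blast
  show "\<bar>f x\<bar> \<le> 1" using BL(2-4) by (meson add_increasing2 order_trans)
  have "L-lipschitz_on UNIV f" using BL(2,5) unfolding lipschitz_on_def dist_real_def by blast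
  then show "f \<in> borel_measurable borel"
    by (intro borel_measurable_continuous_onI lipschitz_on_continuous_on)
qed

lemma zero_in_BL1: "(\<lambda>x. 0) \<in> BL1"
  unfolding BL1_def by (auto intro!: exI[of _ 0])

lemma BL1_translate:
  assumes "f \<in> BL1"
  shows "(\<lambda>x. f (c + x)) \<in> BL1"
proof -
  obtain B L where BL: "B \<ge> 0" "L \<ge> 0" "B + L \<le> 1" "\<forall>x. \<bar>f x\<bar> \<le> B"
     "\<forall>x y. \<bar>f x - f y\<bar> \<le> L * \<bar>x - y\<bar>" using assms unfolding BL1_def by blast
  have "\<bar>f (c + x) - f (c + y)\<bar> \<le> L * \<bar>x - y\<bar>" for x y
    using BL(5)[rule_format, of "c + x" "c + y"] by simp
  then show ?thesis unfolding BL1_def using BL(1-4) by blast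
qed

lemma integrable_BL1:
  assumes "M \<in> MF" "f \<in> BL1"
  shows "integrable M f"
proof -
  interpret finite_measure M by (rule MFD(2)[OF assms(1)])
  show ?thesis
    using BL1D(1)[OF assms(2)] measurable_MF_borel[OF assms(1) BL1D(2)[OF assms(2)]]
    by (intro integrable_const_bound[where B=1]) auto
qed

lemma abs_integral_BL1_le:
  assumes "M \<in> MF" "f \<in> BL1"
  shows "\<bar>\<integral>x. f x \<partial>M\<bar> \<le> measure M UNIV"
proof -
  interpret finite_measure M by (rule MFD(2)[OF assms(1)])
  have "\<bar>\<integral>x. f x \<partial>M\<bar> \<le> (\<integral>x. \<bar>f x\<bar> \<partial>M)" by (rule integral_abs_bound)
  also have "\<dots> \<le> (\<integral>x. 1 \<partial>M)"
    using integrable_BL1[OF assms] BL1D(1)[OF assms(2)] by (intro integral_mono) auto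
  finally have "\<bar>\<integral>x. f x \<partial>M\<bar> \<le> (\<integral>x. 1 \<partial>M)" .
  then show ?thesis using MFD(4)[OF assms(1)] by simp
qed

lemma dBL_leI:
  assumes "\<And>f. f \<in> BL1 \<Longrightarrow> \<bar>(\<integral>x. f x \<partial>M) - (\<integral>x. f x \<partial>N)\<bar> \<le> c"
  shows "dBL M N \<le> c"
  unfolding dBL_def by (rule cSup_least) (use zero_in_BL1 assms in blast)+

lemma abs_integral_diff_le_dBL:
  assumes "M \<in> MF" "N \<in> MF" "f \<in> BL1"
  shows "\<bar>(\<integral>x. f x \<partial>M) - (\<integral>x. f x \<partial>N)\<bar> \<le> dBL M N"
  unfolding dBL_def
proof (rule cSup_upper)
  show "bdd_above {\<bar>(\<integral>x. f x \<partial>M) - (\<integral>x. f x \<partial>N)\<bar> | f. f \<in> BL1}"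
  proof (rule bdd_aboveI)
    fix y assume "y \<in> {\<bar>(\<integral>x. f x \<partial>M) - (\<integral>x. f x \<partial>N)\<bar> | f. f \<in> BL1}"
    then obtain g where "g \<in> BL1" "y = \<bar>(\<integral>x. g x \<partial>M) - (\<integral>x. g x \<partial>N)\<bar>" by blast
    then show "y \<le> measure M UNIV + measure N UNIV"
      using abs_integral_BL1_le[OF assms(1) \<open>g \<in> BL1\<close>] abs_integral_BL1_le[OF assms(2) \<open>g \<in> BL1\<close>]
      by linarith
  qed
qed (use assms(3) in blast)

lemma dBL_nonneg: "M \<in> MF \<Longrightarrow> N \<in> MF \<Longrightarrow> 0 \<le> dBL M N"
  using abs_integral_diff_le_dBL[OF _ _ zero_in_BL1] by simp

lemma dBL_commute: "dBL M N = dBL N M"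
  unfolding dBL_def by (simp add: abs_minus_commute)

lemma dBL_self [simp]: "dBL M M = 0"
proof -
  have "{\<bar>(\<integral>x. f x \<partial>M) - (\<integral>x. f x \<partial>M)\<bar> | f. f \<in> BL1} = {0}" using zero_in_BL1 by auto
  then show ?thesis unfolding dBL_def by simp
qed

lemma dBL_triangle:
  assumes "M \<in> MF" "N \<in> MF" "K \<in> MF"
  shows "dBL M K \<le> dBL M N + dBL N K"
proof (rule dBL_leI)
  fix f assume f: "f \<in> BL1"
  show "\<bar>(\<integral>x. f x \<partial>M) - (\<integral>x. f x \<partial>K)\<bar> \<le> dBL M N + dBL N K"
    using abs_integral_diff_le_dBL[OF assms(1,2) f] abs_integral_diff_le_dBL[OF assms(2,3) f] by linarith
qed

section \<open>Grafting finite measures\<close>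

lemma Hgt_nonneg: "0 \<le> Hgt M"
  unfolding Hgt_def by (auto intro: cSup_upper2[of 0])

lemma sets_graftM [measurable_cong]: "sets (graftM M N) = sets borel"
  unfolding graftM_def by (metis sets.sets_measure_of_eq space_borel)

lemma space_graftM: "space (graftM M N) = UNIV"
  using sets_eq_imp_space_eq[OF sets_graftM] by simp

lemma emeasure_graftM:
  assumes M: "M \<in> MF" and A: "A \<in> sets borel"
  shows "emeasure (graftM M N) A = emeasure M A + emeasure (distr N borel (\<lambda>x. Hgt M + x)) A"
  unfolding graftM_def
proof (rule emeasure_measure_of_sigma)
  show "sigma_algebra UNIV (sets borel)"
    using sets.sigma_algebra_axioms[of borel] by simp
  show "positive (sets borel) (\<lambda>A. emeasure M A + emeasure (distr N borel (\<lambda>x. Hgt M + x)) A)"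
    unfolding positive_def by simp
  show "countably_additive (sets borel) (\<lambda>A. emeasure M A + emeasure (distr N borel (\<lambda>x. Hgt M + x)) A)"
    unfolding countably_additive_def
  proof (intro allI impI)
    fix F :: "nat \<Rightarrow> real set"
    assume F: "range F \<subseteq> sets borel" "disjoint_family F"
    have "(\<Sum>i. emeasure M (F i)) = emeasure M (\<Union>i. F i)"
      using F MFD(1)[OF M] by (intro suminf_emeasure) auto
    moreover have "(\<Sum>i. emeasure (distr N borel (\<lambda>x. Hgt M + x)) (F i)) =
        emeasure (distr N borel (\<lambda>x. Hgt M + x)) (\<Union>i. F i)"
      using F by (intro suminf_emeasure) auto
    ultimately show "(\<Sum>i. emeasure M (F i) + emeasure (distr N borel (\<lambda>x. Hgt M + x)) (F i)) =
        emeasure M (\<Union> (range F)) + emeasure (distr N borel (\<lambda>x. Hgt M + x)) (\<Union> (range F))"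
      by (simp add: suminf_add[symmetric])
  qed
qed (rule A)

lemma emeasure_distr_translate:
  assumes N: "N \<in> MF" and A: "A \<in> sets borel"
  shows "emeasure (distr N borel (\<lambda>x. c + x)) A = emeasure N ((\<lambda>x. c + x) -` A)"
  using emeasure_distr[OF measurable_MF_borel[OF N] A] MFD(4)[OF N] by simp

lemma graftM_in_MF:
  assumes M: "M \<in> MF" and N: "N \<in> MF"
  shows "graftM M N \<in> MF"
proof -
  have "emeasure (graftM M N) UNIV = emeasure M UNIV + emeasure N UNIV"
    using emeasure_graftM[OF M, of UNIV N] emeasure_distr_translate[OF N, of UNIV] by simp
  also have "\<dots> < \<infinity>"
    using finite_measure.emeasure_finite[OF MFD(2)[OF M], of UNIV]
      finite_measure.emeasure_finite[OF MFD(2)[OF N], of UNIV] MFD(4)[OF M] MFD(4)[OF N]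
    by (simp add: less_top)
  finally have "finite_measure (graftM M N)"
    by (intro finite_measureI) (simp add: space_graftM)
  moreover have "(\<lambda>x. Hgt M + x) -` {..<0} \<subseteq> {..<0}"
    using Hgt_nonneg[of M] by auto
  then have "emeasure N ((\<lambda>x. Hgt M + x) -` {..<0}) = 0"
    using emeasure_mono[of _ "{..<0}" N] MFD(1,3)[OF N] by (simp add: le_zero_eq)
  then have "emeasure (graftM M N) {..<0} = 0"
    using emeasure_graftM[OF M, of "{..<0}" N] emeasure_distr_translate[OF N, of "{..<0}"] MFD(3)[OF M]
    by simp
  ultimately show ?thesis unfolding MF_def using sets_graftM by blast
qed

lemma nn_integral_graftM:
  fixes f :: "real \<Rightarrow> ennreal"
  assumes M: "M \<in> MF" and f: "f \<in> borel_measurable borel"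
  shows "(\<integral>\<^sup>+x. f x \<partial>graftM M N) = (\<integral>\<^sup>+x. f x \<partial>M) + (\<integral>\<^sup>+x. f x \<partial>distr N borel (\<lambda>x. Hgt M + x))"
  using f
proof (induct rule: borel_measurable_induct)
  case (cong f g)
  then have "f = g" by auto
  then show ?case using cong by simp
next
  case (set A)
  then show ?case
    using emeasure_graftM[OF M set] MFD(1)[OF M] by (simp add: nn_integral_indicator)
next
  case (mult u c)
  have "u \<in> borel_measurable M" using measurable_MF_borel[OF M mult(2)] .
  then show ?case using mult by (simp add: nn_integral_cmult distrib_left)
next
  case (add u v)
  have "u \<in> borel_measurable M" "v \<in> borel_measurable M"
    using measurable_MF_borel[OF M] add(1,4) by blast+
  then show ?case using add by (simp add: nn_integral_add algebra_simps)
next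
  case (seq U)
  let ?S = "distr N borel (\<lambda>x. Hgt M + x)"
  have UM: "\<And>i. U i \<in> borel_measurable M" using measurable_MF_borel[OF M seq(1)] .
  have mono: "incseq (\<lambda>i. integral\<^sup>N K (U i))" for K
    using seq(4) unfolding incseq_def by (auto intro!: nn_integral_mono simp: le_fun_def)
  have "(\<integral>\<^sup>+x. (SUP i. U i) x \<partial>graftM M N) = (SUP i. integral\<^sup>N M (U i) + integral\<^sup>N ?S (U i))"
    unfolding SUP_apply using seq(1,3,4) by (simp add: nn_integral_monotone_convergence_SUP)
  also have "\<dots> = (SUP i. integral\<^sup>N M (U i)) + (SUP i. integral\<^sup>N ?S (U i))"
    by (rule ennreal_SUP_add[OF mono mono])
  finally show ?case
    unfolding SUP_apply using seq(1,4) UM by (simp add: nn_integral_monotone_convergence_SUP)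
qed

lemma integral_graftM:
  assumes M: "M \<in> MF" and N: "N \<in> MF" and f: "f \<in> BL1"
  shows "(\<integral>x. f x \<partial>graftM M N) = (\<integral>x. f x \<partial>M) + (\<integral>x. f (Hgt M + x) \<partial>N)"
proof -
  let ?S = "distr N borel (\<lambda>x. Hgt M + x)"
  have shift: "(\<lambda>x. Hgt M + x) \<in> measurable N borel"
    by (rule measurable_MF_borel[OF N]) simp
  have iM: "integrable M f" by (rule integrable_BL1[OF M f])
  have iS: "integrable ?S f"
    using integrable_BL1[OF N BL1_translate[OF f]] BL1D(2)[OF f]
    by (subst integrable_distr_eq[OF shift]) auto
  have iG: "integrable (graftM M N) f" by (rule integrable_BL1[OF graftM_in_MF[OF M N] f])
  have "(\<integral>x. f x \<partial>graftM M N) = (\<integral>x. f x \<partial>M) + (\<integral>x. f x \<partial>?S)"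
    unfolding real_lebesgue_integral_def[OF iG] real_lebesgue_integral_def[OF iM]
      real_lebesgue_integral_def[OF iS]
    using BL1D(2)[OF f] integrableD(2,3)[OF iM] integrableD(2,3)[OF iS]
    by (simp add: nn_integral_graftM[OF M] enn2real_plus less_top)
  then show ?thesis using integral_distr[OF shift BL1D(2)[OF f]] by simp
qed

lemma dBL_graftM_graftM_le:
  assumes "M \<in> MF" "N \<in> MF" "N' \<in> MF"
  shows "dBL (graftM M N) (graftM M N') \<le> dBL N N'"
  using assms abs_integral_diff_le_dBL[OF assms(2,3) BL1_translate]
  by (intro dBL_leI) (simp add: integral_graftM)

lemma dBL_graftM_le:
  assumes "M \<in> MF" "N \<in> MF"
  shows "dBL (graftM M N) M \<le> dBL N zeroM"
  using assms abs_integral_diff_le_dBL[OF assms(2) zeroM_in_MF BL1_translate]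
  by (intro dBL_leI) (simp add: integral_graftM)

section \<open>Cadlag paths and grafting of paths\<close>

definition right_cont_at :: "(real \<Rightarrow> real measure) \<Rightarrow> real \<Rightarrow> bool" where
  "right_cont_at Y t \<longleftrightarrow> (\<forall>e>0. \<exists>d>0. \<forall>r. t \<le> r \<and> r < t + d \<longrightarrow> dBL (Y r) (Y t) < e)"

definition left_lim_at :: "(real \<Rightarrow> real measure) \<Rightarrow> real \<Rightarrow> real measure \<Rightarrow> bool" where
  "left_lim_at Y t m \<longleftrightarrow> (\<forall>e>0. \<exists>d>0. \<forall>r. t - d < r \<and> r < t \<longrightarrow> dBL (Y r) m < e)"

lemma cadlag_iff:
  "Y \<in> cadlag \<longleftrightarrow> (\<forall>t\<ge>0. Y t \<in> MF) \<and> (\<forall>t\<ge>0. right_cont_at Y t) \<and> (\<forall>t>0. \<exists>m\<in>MF. left_lim_at Y t m)"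
  unfolding cadlag_def right_cont_at_def left_lim_at_def by blast

lemma cadlagD:
  assumes "Y \<in> cadlag"
  shows "t \<ge> 0 \<Longrightarrow> Y t \<in> MF" "t \<ge> 0 \<Longrightarrow> right_cont_at Y t" "t > 0 \<Longrightarrow> \<exists>m\<in>MF. left_lim_at Y t m"
  using assms unfolding cadlag_iff by blast+

lemma right_cont_atD:
  "right_cont_at Y t \<Longrightarrow> e > 0 \<Longrightarrow> \<exists>d>0. \<forall>r. t \<le> r \<and> r < t + d \<longrightarrow> dBL (Y r) (Y t) < e"
  unfolding right_cont_at_def by blast

lemma left_lim_atD:
  "left_lim_at Y t m \<Longrightarrow> e > 0 \<Longrightarrow> \<exists>d>0. \<forall>r. t - d < r \<and> r < t \<longrightarrow> dBL (Y r) m < e"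
  unfolding left_lim_at_def by blast

lemma right_cont_at_cong:
  assumes "d > 0" "\<And>r. t \<le> r \<Longrightarrow> r < t + d \<Longrightarrow> G r = F r" "right_cont_at F t"
  shows "right_cont_at G t"
  unfolding right_cont_at_def
proof (intro allI impI)
  fix e :: real assume "e > 0"
  then obtain d' where "d' > 0" "\<forall>r. t \<le> r \<and> r < t + d' \<longrightarrow> dBL (F r) (F t) < e"
    using right_cont_atD[OF assms(3)] by blast
  then show "\<exists>d>0. \<forall>r. t \<le> r \<and> r < t + d \<longrightarrow> dBL (G r) (G t) < e"
    using assms(1,2) by (intro exI[of _ "min d d'"]) auto
qed

lemma left_lim_at_cong:
  assumes "d > 0" "\<And>r. t - d < r \<Longrightarrow> r < t \<Longrightarrow> G r = F r" "left_lim_at F t m"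
  shows "left_lim_at G t m"
  unfolding left_lim_at_def
proof (intro allI impI)
  fix e :: real assume "e > 0"
  then obtain d' where "d' > 0" "\<forall>r. t - d' < r \<and> r < t \<longrightarrow> dBL (F r) m < e"
    using left_lim_atD[OF assms(3)] by blast
  then show "\<exists>d>0. \<forall>r. t - d < r \<and> r < t \<longrightarrow> dBL (G r) m < e"
    using assms(1,2) by (intro exI[of _ "min d d'"]) auto
qed

lemma right_cont_at_shift:
  assumes "right_cont_at F (t - c)"
  shows "right_cont_at (\<lambda>r. F (r - c)) t"
  unfolding right_cont_at_def
proof (intro allI impI)
  fix e :: real assume "e > 0"
  then obtain d where "d > 0" "\<forall>r. t - c \<le> r \<and> r < t - c + d \<longrightarrow> dBL (F r) (F (t - c)) < e"
    using right_cont_atD[OF assms] by blast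
  then show "\<exists>d>0. \<forall>r. t \<le> r \<and> r < t + d \<longrightarrow> dBL (F (r - c)) (F (t - c)) < e"
    by (intro exI[of _ d]) auto
qed

lemma left_lim_at_shift:
  assumes "left_lim_at F (t - c) m"
  shows "left_lim_at (\<lambda>r. F (r - c)) t m"
  unfolding left_lim_at_def
proof (intro allI impI)
  fix e :: real assume "e > 0"
  then obtain d where "d > 0" "\<forall>r. t - c - d < r \<and> r < t - c \<longrightarrow> dBL (F r) m < e"
    using left_lim_atD[OF assms] by blast
  then show "\<exists>d>0. \<forall>r. t - d < r \<and> r < t \<longrightarrow> dBL (F (r - c)) m < e"
    by (intro exI[of _ d]) auto
qed

lemma right_cont_at_graftM:
  assumes M: "M \<in> MF" and F: "\<And>r. r \<ge> 0 \<Longrightarrow> F r \<in> MF" and t: "t \<ge> 0" and "right_cont_at F t"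
  shows "right_cont_at (\<lambda>r. graftM M (F r)) t"
  unfolding right_cont_at_def
proof (intro allI impI)
  fix e :: real assume "e > 0"
  then obtain d where d: "d > 0" "\<forall>r. t \<le> r \<and> r < t + d \<longrightarrow> dBL (F r) (F t) < e"
    using right_cont_atD[OF assms(4)] by blast
  have "dBL (graftM M (F r)) (graftM M (F t)) < e" if "t \<le> r" "r < t + d" for r
    using le_less_trans[OF dBL_graftM_graftM_le[OF M F[of r] F[OF t]]] d(2) that t by simp
  then show "\<exists>d>0. \<forall>r. t \<le> r \<and> r < t + d \<longrightarrow> dBL (graftM M (F r)) (graftM M (F t)) < e"
    using d(1) by blast
qed

lemma left_lim_at_graftM:
  assumes M: "M \<in> MF" and F: "\<And>r. r \<ge> 0 \<Longrightarrow> F r \<in> MF" and t: "t > 0"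
    and m: "m \<in> MF" "left_lim_at F t m"
  shows "left_lim_at (\<lambda>r. graftM M (F r)) t (graftM M m)"
  unfolding left_lim_at_def
proof (intro allI impI)
  fix e :: real assume "e > 0"
  then obtain d where d: "d > 0" "\<forall>r. t - d < r \<and> r < t \<longrightarrow> dBL (F r) m < e"
    using left_lim_atD[OF m(2)] by blast
  have "dBL (graftM M (F r)) (graftM M m) < e" if "t - min d t < r" "r < t" for r
    using le_less_trans[OF dBL_graftM_graftM_le[OF M F[of r] m(1)]] d(2) that by simp
  then show "\<exists>d>0. \<forall>r. t - d < r \<and> r < t \<longrightarrow> dBL (graftM M (F r)) (graftM M m) < e"
    using d(1) t by (intro exI[of _ "min d t"]) auto
qed

lemma D0D:
  assumes "mu \<in> D0"
  shows "mu \<in> cadlag" "deadset mu \<noteq> {}"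
    "lifetime mu > 0 \<Longrightarrow> e > 0 \<Longrightarrow>
       \<exists>d>0. \<forall>t. lifetime mu - d < t \<and> t < lifetime mu \<longrightarrow> dBL (mu t) zeroM < e"
  using assms unfolding D0_def by blast+

lemma lifetime_nonneg: "deadset mu \<noteq> {} \<Longrightarrow> 0 \<le> lifetime mu"
  unfolding lifetime_def by (rule cInf_greatest) (auto simp: deadset_def)

lemma eq_zeroM_after_lifetime:
  assumes "deadset mu \<noteq> {}" "lifetime mu < t"
  shows "mu t = zeroM"
proof -
  obtain x where x: "x \<in> deadset mu" "x < t"
    using cInf_lessD[OF assms(1)] assms(2) unfolding lifetime_def by blast
  then have "\<forall>r\<ge>0. mu (x + r) = zeroM" unfolding deadset_def by blast
  then have "mu (x + (t - x)) = zeroM" using x(2) by (metis diff_ge_0_iff_ge less_eq_real_def)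
  then show ?thesis by simp
qed

lemma dBL_zeroM_from_lifetime:
  assumes mu: "mu \<in> D0" and t: "lifetime mu \<le> t"
  shows "dBL (mu t) zeroM = 0"
proof -
  have t0: "0 \<le> t" using lifetime_nonneg[OF D0D(2)[OF mu]] t by linarith
  have "dBL (mu t) zeroM \<le> 0 + e" if e: "e > 0" for e
  proof -
    obtain d where d: "d > 0" "\<forall>r. t \<le> r \<and> r < t + d \<longrightarrow> dBL (mu r) (mu t) < e"
      using right_cont_atD[OF cadlagD(2)[OF D0D(1)[OF mu] t0] e] by blast
    have "mu (t + d/2) = zeroM" by (rule eq_zeroM_after_lifetime[OF D0D(2)[OF mu]]) (use d t in linarith)
    moreover have "dBL (mu (t + d/2)) (mu t) < e" using d by simp
    ultimately show ?thesis by (simp add: dBL_commute)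
  qed
  then have "dBL (mu t) zeroM \<le> 0" by (rule field_le_epsilon)
  then show ?thesis using dBL_nonneg[OF cadlagD(1)[OF D0D(1)[OF mu] t0] zeroM_in_MF] by simp
qed

lemma dBL_zeroM_near_lifetime:
  assumes mu: "mu \<in> D0" and e: "e > 0"
  obtains \<rho> where "\<rho> > 0" "\<And>r. 0 \<le> r \<Longrightarrow> lifetime mu - \<rho> < r \<Longrightarrow> dBL (mu r) zeroM < e"
proof (cases "lifetime mu > 0")
  case True
  then obtain d where d: "d > 0" "\<forall>t. lifetime mu - d < t \<and> t < lifetime mu \<longrightarrow> dBL (mu t) zeroM < e"
    using D0D(3)[OF mu _ e] by blast
  have "dBL (mu r) zeroM < e" if "0 \<le> r" "lifetime mu - d < r" for r
  proof (cases "r < lifetime mu")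
    case False then show ?thesis using dBL_zeroM_from_lifetime[OF mu] e by simp
  qed (use d that in blast)
  then show ?thesis using that d(1) by blast
next
  case False
  then have "lifetime mu = 0" using lifetime_nonneg[OF D0D(2)[OF mu]] by simp
  then show ?thesis using that[of 1] dBL_zeroM_from_lifetime[OF mu] e by simp
qed

lemma graft_eq_piecewise:
  assumes "\<not> (deadset nu \<noteq> {} \<and> lifetime nu \<le> s)"
  shows "graft nu s mu t = (if t < s then nu t else if t < s + lifetime mu then graftM (nu s) (mu (t - s))
           else nu (t - lifetime mu))"
  unfolding graft_def if_not_P[OF assms] by simp

lemma graft_in_MF:
  assumes nondeg: "\<not> (deadset nu \<noteq> {} \<and> lifetime nu \<le> s)" and nu: "nu \<in> cadlag" and s: "s \<ge> 0"
    and mu: "mu \<in> D0" and t: "t \<ge> 0"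
  shows "graft nu s mu t \<in> MF"
proof -
  have \<sigma>: "lifetime mu \<ge> 0" by (rule lifetime_nonneg[OF D0D(2)[OF mu]])
  consider "t < s" | "s \<le> t" "t < s + lifetime mu" | "s + lifetime mu \<le> t" by linarith
  then show ?thesis
  proof cases
    case 2
    then show ?thesis
      using graftM_in_MF[OF cadlagD(1)[OF nu s] cadlagD(1)[OF D0D(1)[OF mu], of "t - s"]]
      by (simp add: graft_eq_piecewise[OF nondeg])
  qed (use t s \<sigma> cadlagD(1)[OF nu] in \<open>simp_all add: graft_eq_piecewise[OF nondeg]\<close>)
qed

lemma right_cont_at_graft:
  assumes nondeg: "\<not> (deadset nu \<noteq> {} \<and> lifetime nu \<le> s)" and nu: "nu \<in> cadlag" and s: "s \<ge> 0"
    and mu: "mu \<in> D0" and t: "t \<ge> 0"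
  shows "right_cont_at (graft nu s mu) t"
proof -
  define \<sigma> where "\<sigma> = lifetime mu"
  have \<sigma>: "\<sigma> \<ge> 0" unfolding \<sigma>_def by (rule lifetime_nonneg[OF D0D(2)[OF mu]])
  note G = graft_eq_piecewise[OF nondeg, of mu, folded \<sigma>_def]
  consider "t < s" | "s \<le> t" "t < s + \<sigma>" | "s + \<sigma> \<le> t" by linarith
  then show ?thesis
  proof cases
    case 1
    then show ?thesis
      using G by (intro right_cont_at_cong[of "s - t" t "graft nu s mu" nu] cadlagD(2)[OF nu t]) auto
  next
    case 2
    have "right_cont_at (\<lambda>r. graftM (nu s) (mu (r - s))) t"
      using 2 cadlagD(1,2)[OF D0D(1)[OF mu]]
      by (intro right_cont_at_shift[of "\<lambda>r. graftM (nu s) (mu r)"]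
          right_cont_at_graftM[OF cadlagD(1)[OF nu s]]) auto
    then show ?thesis
      using 2 G by (intro right_cont_at_cong[of "s + \<sigma> - t" t "graft nu s mu" "\<lambda>r. graftM (nu s) (mu (r - s))"]) auto
  next
    case 3
    then have "right_cont_at (\<lambda>r. nu (r - \<sigma>)) t"
      using cadlagD(2)[OF nu, of "t - \<sigma>"] s by (intro right_cont_at_shift[of nu]) simp
    then show ?thesis using 3 G \<sigma> by (intro right_cont_at_cong[of 1 t "graft nu s mu" "\<lambda>r. nu (r - \<sigma>)"]) auto
  qed
qed

lemma left_lim_at_graft:
  assumes nondeg: "\<not> (deadset nu \<noteq> {} \<and> lifetime nu \<le> s)" and nu: "nu \<in> cadlag" and s: "s \<ge> 0"
    and mu: "mu \<in> D0" and t: "t > 0"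
  shows "\<exists>m\<in>MF. left_lim_at (graft nu s mu) t m"
proof -
  define \<sigma> where "\<sigma> = lifetime mu"
  have \<sigma>: "\<sigma> \<ge> 0" unfolding \<sigma>_def by (rule lifetime_nonneg[OF D0D(2)[OF mu]])
  note G = graft_eq_piecewise[OF nondeg, of mu, folded \<sigma>_def]
  consider "t \<le> s" | "s < t" "t \<le> s + \<sigma>" | "s + \<sigma> < t" by linarith
  then show ?thesis
  proof cases
    case 1
    obtain m where "m \<in> MF" "left_lim_at nu t m" using cadlagD(3)[OF nu t] by blast
    then show ?thesis using 1 G t by (intro bexI[of _ m] left_lim_at_cong[of t t "graft nu s mu" nu]) auto
  next
    case 2
    obtain m where m: "m \<in> MF" "left_lim_at mu (t - s) m" using cadlagD(3)[OF D0D(1)[OF mu], of "t - s"] 2 by auto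
    then have "left_lim_at (\<lambda>r. graftM (nu s) (mu (r - s))) t (graftM (nu s) m)"
      using 2 cadlagD(1)[OF D0D(1)[OF mu]]
      by (intro left_lim_at_shift[of "\<lambda>r. graftM (nu s) (mu r)"]
          left_lim_at_graftM[OF cadlagD(1)[OF nu s]]) auto
    then show ?thesis
      using 2 G graftM_in_MF[OF cadlagD(1)[OF nu s] m(1)]
      by (intro bexI[of _ "graftM (nu s) m"]
          left_lim_at_cong[of "t - s" t "graft nu s mu" "\<lambda>r. graftM (nu s) (mu (r - s))"]) auto
  next
    case 3
    obtain m where m: "m \<in> MF" "left_lim_at nu (t - \<sigma>) m" using cadlagD(3)[OF nu, of "t - \<sigma>"] 3 s by auto
    then have "left_lim_at (\<lambda>r. nu (r - \<sigma>)) t m" by (intro left_lim_at_shift[of nu]) simp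
    then show ?thesis
      using 3 G m(1) \<sigma> by (intro bexI[of _ m] left_lim_at_cong[of "t - s - \<sigma>" t "graft nu s mu" "\<lambda>r. nu (r - \<sigma>)"]) auto
  qed
qed

lemma graft_cadlag:
  assumes nu: "nu \<in> cadlag" and s: "s \<ge> 0" and mu: "mu \<in> D0"
    and nondeg: "\<not> (deadset nu \<noteq> {} \<and> lifetime nu \<le> s)"
  shows "graft nu s mu \<in> cadlag"
  unfolding cadlag_iff
  using graft_in_MF[OF nondeg nu s mu] right_cont_at_graft[OF nondeg nu s mu]
    left_lim_at_graft[OF nondeg nu s mu] by blast

section \<open>Time changes\<close>

definition log_slopes_le :: "real \<Rightarrow> (real \<Rightarrow> real) \<Rightarrow> real set \<Rightarrow> bool" where
  "log_slopes_le g l I \<longleftrightarrow>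
     (\<forall>t\<in>I. \<forall>u\<in>I. t \<le> u \<longrightarrow> exp (- g) * (u - t) \<le> l u - l t \<and> l u - l t \<le> exp g * (u - t))"

lemma log_slopes_leD:
  "log_slopes_le g l I \<Longrightarrow> t \<in> I \<Longrightarrow> u \<in> I \<Longrightarrow> t \<le> u \<Longrightarrow>
     exp (- g) * (u - t) \<le> l u - l t \<and> l u - l t \<le> exp g * (u - t)"
  unfolding log_slopes_le_def by blast

lemma log_slopes_le_Un:
  assumes A: "log_slopes_le g l A" and B: "log_slopes_le g l B"
    and q: "q \<in> A" "q \<in> B" "A \<subseteq> {..q}" "B \<subseteq> {q..}"
  shows "log_slopes_le g l (A \<union> B)"
  unfolding log_slopes_le_def
proof (intro ballI impI)
  fix t u assume tu: "t \<in> A \<union> B" "u \<in> A \<union> B" "t \<le> u"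
  show "exp (- g) * (u - t) \<le> l u - l t \<and> l u - l t \<le> exp g * (u - t)"
  proof (cases "t \<in> A \<and> u \<in> B")
    case True
    then have "t \<le> q" "q \<le> u" using q by auto
    then show ?thesis
      using log_slopes_leD[OF A, of t q] log_slopes_leD[OF B, of q u] True q by (simp add: algebra_simps)
  next
    case False
    have "t \<in> A \<and> u \<in> A \<or> t \<in> B \<and> u \<in> B"
    proof (cases "t \<in> B \<and> u \<in> A")
      case True
      then have "q \<le> t" "u \<le> q" using q(3,4) by auto
      then have "t = q" "u = q" using tu(3) by auto
      then show ?thesis using q(1) by simp
    qed (use False tu in blast)
    then show ?thesis using log_slopes_leD[OF A] log_slopes_leD[OF B] tu(3) by blast
  qed
qed

lemma log_slopes_le_mono:
  assumes "g \<le> g'" "log_slopes_le g l I"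
  shows "log_slopes_le g' l I"
  unfolding log_slopes_le_def
proof (intro ballI impI)
  fix t u assume tu: "t \<in> I" "u \<in> I" "t \<le> u"
  have "exp (- g') * (u - t) \<le> exp (- g) * (u - t)" "exp g * (u - t) \<le> exp g' * (u - t)"
    using assms(1) tu(3) by (auto intro: mult_right_mono)
  then show "exp (- g') * (u - t) \<le> l u - l t \<and> l u - l t \<le> exp g' * (u - t)"
    using log_slopes_leD[OF assms(2) tu] by linarith
qed

lemma log_slopes_le_affine:
  assumes "\<And>t. t \<in> I \<Longrightarrow> l t = c + k * t" "exp (- g) \<le> k" "k \<le> exp g"
  shows "log_slopes_le g l I"
  unfolding log_slopes_le_def
proof (intro ballI impI)
  fix t u assume "t \<in> I" "u \<in> I" "t \<le> u"
  then have "l u - l t = k * (u - t)" using assms(1) by (simp add: algebra_simps)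
  then show "exp (- g) * (u - t) \<le> l u - l t \<and> l u - l t \<le> exp g * (u - t)"
    using assms(2,3) \<open>t \<le> u\<close> by (simp add: mult_right_mono)
qed

lemma log_slopes_le_shift:
  assumes "log_slopes_le g l {0..}" "I \<subseteq> {s..}" "\<And>t. t \<in> I \<Longrightarrow> L t = c + l (t - s)"
  shows "log_slopes_le g L I"
  unfolding log_slopes_le_def
proof (intro ballI impI)
  fix t u assume tu: "t \<in> I" "u \<in> I" "t \<le> u"
  then have "exp (- g) * ((u - s) - (t - s)) \<le> l (u - s) - l (t - s) \<and>
      l (u - s) - l (t - s) \<le> exp g * ((u - s) - (t - s))"
    using assms(2) by (intro log_slopes_leD[OF assms(1)]) auto
  then show "exp (- g) * (u - t) \<le> L u - L t \<and> L u - L t \<le> exp g * (u - t)"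
    using assms(3) tu by simp
qed

lemma abs_ln_le_iff:
  fixes q g :: real
  assumes "0 < q"
  shows "\<bar>ln q\<bar> \<le> g \<longleftrightarrow> exp (- g) \<le> q \<and> q \<le> exp g"
proof -
  have "exp (- g) \<le> q \<longleftrightarrow> - g \<le> ln q" "q \<le> exp g \<longleftrightarrow> ln q \<le> g"
    using exp_le_cancel_iff[of "- g" "ln q"] exp_le_cancel_iff[of "ln q" g] exp_ln[OF assms] by simp_all
  then show ?thesis by (auto simp: abs_le_iff)
qed

lemma lipschitz_on_if_log_slopes_le:
  assumes "log_slopes_le g l I"
  shows "(exp g)-lipschitz_on I l"
proof (rule lipschitz_onI)
  have ordered: "dist (l t) (l u) \<le> exp g * dist t u" if "t \<in> I" "u \<in> I" "t \<le> u" for t u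
  proof -
    have "0 \<le> exp (- g) * (u - t)" using that(3) by simp
    then have "dist (l t) (l u) = l u - l t"
      using log_slopes_leD[OF assms that] by (simp add: dist_real_def)
    then show ?thesis using log_slopes_leD[OF assms that] that(3) by (simp add: dist_real_def)
  qed
  show "dist (l t) (l u) \<le> exp g * dist t u" if "t \<in> I" "u \<in> I" for t u
  proof (cases "t \<le> u")
    case False
    then have "dist (l u) (l t) \<le> exp g * dist u t" using ordered that by simp
    then show ?thesis by (simp add: dist_commute)
  qed (use ordered that in blast)
qed simp

lemma image_atLeast_if_log_slopes_le:
  assumes slopes: "log_slopes_le g l {0..}" and l0: "l 0 = 0"
  shows "l ` {0..} = {0..}"
proof
  have bounds: "exp (- g) * t \<le> l t \<and> l t \<le> exp g * t" if "0 \<le> t" for t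
    using log_slopes_leD[OF slopes, of 0 t] l0 that by simp
  show "l ` {0..} \<subseteq> {0..}"
  proof
    fix y assume "y \<in> l ` {0..}"
    then obtain t where t: "t \<ge> 0" "y = l t" by auto
    then have "0 \<le> exp (- g) * t" "exp (- g) * t \<le> l t" using bounds by auto
    then have "0 \<le> l t" by linarith
    then show "y \<in> {0..}" using t by simp
  qed
  show "{0..} \<subseteq> l ` {0..}"
  proof
    fix y :: real assume "y \<in> {0..}"
    then have y: "y \<ge> 0" by simp
    have "exp (- g) * (y * exp g) = y" by (simp add: exp_minus)
    moreover have "0 \<le> y * exp g" using y by simp
    ultimately have "y \<le> l (y * exp g)" using bounds[of "y * exp g"] by linarith
    moreover have "continuous_on {0..y * exp g} l"
      using lipschitz_on_subset[OF lipschitz_on_if_log_slopes_le[OF slopes], of "{0..y * exp g}"]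
      by (intro lipschitz_on_continuous_on) auto
    ultimately obtain x where "0 \<le> x" "x \<le> y * exp g" "l x = y"
      using IVT'[of l 0 y "y * exp g"] l0 y by auto
    then show "y \<in> l ` {0..}" by (intro image_eqI[of y l x]) auto
  qed
qed

lemma LamSet_if_log_slopes_le:
  assumes slopes: "log_slopes_le g l {0..}" and l0: "l 0 = 0"
  shows "l \<in> LamSet" "gammaL l \<le> g"
proof -
  have bounds: "exp (- g) * (u - t) \<le> l u - l t \<and> l u - l t \<le> exp g * (u - t)" if "0 \<le> t" "t \<le> u" for t u
    using log_slopes_leD[OF slopes] that by simp
  have chord: "\<bar>ln ((l u - l t) / (u - t))\<bar> \<le> g" if "0 \<le> t" "t < u" for t u
  proof -
    have "exp (- g) \<le> (l u - l t) / (u - t)" "(l u - l t) / (u - t) \<le> exp g"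
      using bounds[of t u] that by (simp_all add: field_simps)
    moreover have "0 < (l u - l t) / (u - t)" using calculation(1) exp_gt_zero[of "- g"] by linarith
    ultimately show ?thesis by (simp add: abs_ln_le_iff)
  qed
  have "strict_mono_on {0..} l"
  proof (rule strict_mono_onI)
    fix t u :: real assume "t \<in> {0..}" "u \<in> {0..}" "t < u"
    then have "0 < exp (- g) * (u - t)" "exp (- g) * (u - t) \<le> l u - l t" using bounds[of t u] by auto
    then show "l t < l u" by linarith
  qed
  then show "l \<in> LamSet"
    unfolding LamSet_def using image_atLeast_if_log_slopes_le[OF slopes l0] chord by blast
  have "(0::real) \<le> 0 \<and> (0::real) < 1" by simp
  then have "\<bar>ln ((l 1 - l 0) / (1 - 0))\<bar> \<in> {\<bar>ln ((l u - l t) / (u - t))\<bar> |u t. 0 \<le> t \<and> t < u}"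
    by blast
  then show "gammaL l \<le> g" unfolding gammaL_def
    by (intro cSup_least) (use chord in blast)+
qed

lemma id_LamSet: "(\<lambda>x. x) \<in> LamSet" "gammaL (\<lambda>x. x) \<le> 0"
  using LamSet_if_log_slopes_le[of 0 "\<lambda>x. x"] log_slopes_le_affine[of "{0..}" "\<lambda>x. x" 0 1 0] by auto

lemma LamSetD: "l \<in> LamSet \<Longrightarrow> strict_mono_on {0..} l" "l \<in> LamSet \<Longrightarrow> l ` {0..} = {0..}"
  unfolding LamSet_def by blast+

lemma abs_ln_slope_le_gammaL:
  assumes "l \<in> LamSet" "0 \<le> t" "t < u"
  shows "\<bar>ln ((l u - l t) / (u - t))\<bar> \<le> gammaL l"
  unfolding gammaL_def
proof (rule cSup_upper)
  obtain C where "\<forall>u t. 0 \<le> t \<and> t < u \<longrightarrow> \<bar>ln ((l u - l t) / (u - t))\<bar> \<le> C"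
    using assms(1) unfolding LamSet_def by blast
  then show "bdd_above {\<bar>ln ((l u - l t) / (u - t))\<bar> |u t. 0 \<le> t \<and> t < u}"
    by (intro bdd_aboveI[of _ C]) blast
qed (use assms in blast)

lemma gammaL_nonneg: "l \<in> LamSet \<Longrightarrow> 0 \<le> gammaL l"
  using abs_ln_slope_le_gammaL[of l 0 1] by linarith

lemma LamSet_nonneg:
  assumes "l \<in> LamSet" "0 \<le> t"
  shows "0 \<le> l t"
proof -
  have "l t \<in> l ` {0..}" using assms(2) by simp
  then show ?thesis using LamSetD(2)[OF assms(1)] by simp
qed

lemma LamSet_mono: "l \<in> LamSet \<Longrightarrow> 0 \<le> t \<Longrightarrow> t \<le> u \<Longrightarrow> l t \<le> l u"
  using strict_mono_on_leD[OF LamSetD(1)] by simp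

lemma LamSet_zero:
  assumes "l \<in> LamSet"
  shows "l 0 = 0"
proof -
  have "0 \<in> l ` {0..}" using LamSetD(2)[OF assms] by simp
  then obtain x where "x \<ge> 0" "l x = 0" by (metis atLeast_iff imageE)
  then show ?thesis using LamSet_mono[OF assms, of 0 x] LamSet_nonneg[OF assms, of 0] by simp
qed

lemma log_slopes_le_gammaL:
  assumes "l \<in> LamSet"
  shows "log_slopes_le (gammaL l) l {0..}"
  unfolding log_slopes_le_def
proof (intro ballI impI)
  fix t u :: real assume tu: "t \<in> {0..}" "u \<in> {0..}" "t \<le> u"
  show "exp (- gammaL l) * (u - t) \<le> l u - l t \<and> l u - l t \<le> exp (gammaL l) * (u - t)"
  proof (cases "t = u")
    case False
    with tu have tu: "t \<in> {0..}" "u \<in> {0..}" "t < u" by auto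
  have "l t < l u" using strict_mono_onD[OF LamSetD(1)[OF assms]] tu by simp
  then have "exp (- gammaL l) \<le> (l u - l t) / (u - t) \<and> (l u - l t) / (u - t) \<le> exp (gammaL l)"
    using abs_ln_slope_le_gammaL[OF assms, of t u] tu by (subst abs_ln_le_iff[symmetric]) auto
  then show ?thesis using tu by (simp add: field_simps)
  qed simp
qed

lemma abs_LamSet_minus_id_le:
  assumes l: "l \<in> LamSet" and g: "gammaL l \<le> 1/2" and t: "t \<ge> 0"
  shows "\<bar>l t - t\<bar> \<le> 2 * gammaL l * t"
proof (cases "t = 0")
  case True then show ?thesis using LamSet_zero[OF l] by simp
next
  case False
  then have bounds: "exp (- gammaL l) * t \<le> l t \<and> l t \<le> exp (gammaL l) * t"
    using log_slopes_leD[OF log_slopes_le_gammaL[OF l], of 0 t] LamSet_zero[OF l] t by simp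
  have "exp (gammaL l) * t \<le> (1 + 2 * gammaL l) * t"
    using real_exp_bound_lemma[OF gammaL_nonneg[OF l] g] t by (intro mult_right_mono) auto
  moreover have "(1 - gammaL l) * t \<le> exp (- gammaL l) * t"
    using exp_ge_add_one_self[of "- gammaL l"] t by (intro mult_right_mono) auto
  ultimately show ?thesis
    using bounds gammaL_nonneg[OF l] t by (simp add: abs_le_iff algebra_simps)
qed

section \<open>Estimates for the Skorokhod distance\<close>

lemma nn_integral_exp_minus_atLeast:
  "(\<integral>\<^sup>+u. ennreal (exp (- u)) * indicator {c..} u \<partial>lborel) = ennreal (exp (- c))"
proof -
  have "((\<lambda>x::real. exp (- x)) \<longlongrightarrow> 0) at_top"
    using filterlim_compose[OF exp_at_bot filterlim_uminus_at_bot_at_top] by simp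
  then have "((\<lambda>x::real. - exp (- x)) \<longlongrightarrow> - 0) at_top" by (rule tendsto_minus)
  then show ?thesis
    by (subst nn_integral_FTC_atLeast[where F = "\<lambda>x. - exp (- x)" and T = 0])
      (auto intro!: derivative_eq_intros)
qed

definition dSI :: "(real \<Rightarrow> real measure) \<Rightarrow> (real \<Rightarrow> real measure) \<Rightarrow> (real \<Rightarrow> real) \<Rightarrow> ennreal" where
  "dSI x y l = (\<integral>\<^sup>+ u. indicator {0..} u * ennreal (exp (- u) * dSu x y l u) \<partial>lborel)"

lemma dS_eq_Inf_dSI: "dS x y = Inf {max (gammaL l) (enn2real (dSI x y l)) | l. l \<in> LamSet}"
  unfolding dS_def dSI_def by simp

lemma dSu_leI:
  assumes "\<And>t. t \<ge> 0 \<Longrightarrow> min 1 (dBL (x (min t u)) (y (min (l t) u))) \<le> c"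
  shows "dSu x y l u \<le> c"
  unfolding dSu_def by (rule cSup_least) (use assms in \<open>auto intro: exI[of _ 0]\<close>)

lemma dSu_le_1: "dSu x y l u \<le> 1"
  by (rule dSu_leI) simp

lemma dSu_ge:
  assumes "t \<ge> 0"
  shows "min 1 (dBL (x (min t u)) (y (min (l t) u))) \<le> dSu x y l u"
  unfolding dSu_def by (rule cSup_upper) (use assms in \<open>auto intro: bdd_aboveI[of _ 1]\<close>)

lemma dSI_le_1: "dSI x y l \<le> 1"
proof -
  have "dSI x y l \<le> (\<integral>\<^sup>+u. ennreal (exp (- u)) * indicator {0..} u \<partial>lborel)"
    unfolding dSI_def
    by (intro nn_integral_mono) (auto simp: indicator_def intro!: ennreal_leI mult_left_le dSu_le_1)
  then show ?thesis by (simp add: nn_integral_exp_minus_atLeast)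
qed

lemma dS_le:
  assumes "l \<in> LamSet"
  shows "dS x y \<le> max (gammaL l) (enn2real (dSI x y l))"
  unfolding dS_eq_Inf_dSI
  by (rule cInf_lower) (use assms in \<open>auto intro!: bdd_belowI[of _ 0] simp: le_max_iff_disj\<close>)

lemma dS_nonneg: "0 \<le> dS x y"
  unfolding dS_eq_Inf_dSI
  by (rule cInf_greatest) (use id_LamSet(1) in \<open>auto simp: le_max_iff_disj\<close>)

lemma dS_self: "dS x x = 0"
proof -
  have "dSu x x (\<lambda>t. t) u = 0" for u
    using dSu_leI[where x=x and y=x and l="\<lambda>t. t" and c=0 and u=u]
      dSu_ge[where x=x and y=x and l="\<lambda>t. t" and t=0 and u=u] by simp
  then have "dSI x x (\<lambda>t. t) = 0" unfolding dSI_def by simp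
  then show ?thesis
    using dS_le[OF id_LamSet(1), of x x] id_LamSet(2) dS_nonneg[of x x] by simp
qed

lemma dS_lessE:
  assumes "dS x y < d"
  obtains l where "l \<in> LamSet" "gammaL l < d" "dSI x y l < ennreal d"
proof -
  have ne: "{max (gammaL l) (enn2real (dSI x y l)) |l. l \<in> LamSet} \<noteq> {}" using id_LamSet(1) by blast
  obtain v where v: "v \<in> {max (gammaL l) (enn2real (dSI x y l)) |l. l \<in> LamSet}" "v < d"
    using cInf_lessD[OF ne] assms unfolding dS_eq_Inf_dSI by blast
  then obtain l where l: "l \<in> LamSet" "v = max (gammaL l) (enn2real (dSI x y l))" by blast
  have "dSI x y l < top" using dSI_le_1[of x y l] by (rule le_less_trans) simp
  then obtain r where r: "dSI x y l = ennreal r" "r \<ge> 0" by (cases "dSI x y l" rule: ennreal_cases) auto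
  moreover have "r < d" using v l r by simp
  ultimately have "dSI x y l < ennreal d" by (simp add: ennreal_lessI)
  then show ?thesis using that l v by auto
qed

text \<open>A small integral forces the integrand to be small on [U, U + 1], where the truncation at
  time u is invisible since both paths are dead after U.\<close>

lemma min_1_dBL_le_dSI:
  assumes U: "U \<ge> 0" and x: "\<And>t. t \<ge> U \<Longrightarrow> x t = zeroM" and y: "\<And>t. t \<ge> U \<Longrightarrow> y t = zeroM"
    and I: "dSI x y l < ennreal d" and t: "t \<ge> 0"
  shows "min 1 (dBL (x t) (y (l t))) \<le> d * exp (U + 1)"
proof -
  define c where "c = min 1 (dBL (x t) (y (l t)))"
  have d: "d > 0" using I by (metis ennreal_less_zero_iff not_gr_zero not_less_zero)
  show ?thesis
  proof (cases "c \<le> 0")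
    case True then show ?thesis using d unfolding c_def[symmetric] by (simp add: order_trans[OF True])
  next
    case False
    have c_le: "c \<le> dSu x y l u" if "U \<le> u" for u
    proof -
      have "x (min t u) = x t" "y (min (l t) u) = y (l t)"
        using x y that by (auto simp: min_def)
      then show ?thesis using dSu_ge[OF t, where x=x and y=y and l=l and u=u] unfolding c_def by simp
    qed
    have "ennreal (exp (- (U + 1)) * c) * indicator {U..U+1} u
        \<le> indicator {0..} u * ennreal (exp (- u) * dSu x y l u)" for u
    proof (cases "u \<in> {U..U+1}")
      case True
      have "exp (- (U + 1)) * c \<le> exp (- u) * dSu x y l u"
        by (rule mult_mono) (use True c_le False in auto)
      then show ?thesis using True U by (auto simp: indicator_def ennreal_leI)
    qed simp
    then have "(\<integral>\<^sup>+u. ennreal (exp (- (U + 1)) * c) * indicator {U..U+1} u \<partial>lborel) \<le> dSI x y l"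
      unfolding dSI_def by (intro nn_integral_mono)
    then have "ennreal (exp (- (U + 1)) * c) < ennreal d"
      using I by (simp add: nn_integral_cmult_indicator)
    then have "exp (- (U + 1)) * c < d" using False by (simp add: ennreal_less_iff)
    then have "exp (- (U + 1)) * c * exp (U + 1) < d * exp (U + 1)" by simp
    moreover have "exp (- (U + 1)) * c * exp (U + 1) = c"
      by (simp add: mult.commute[of _ c] mult.assoc flip: exp_add)
    ultimately have "c < d * exp (U + 1)" by linarith
    then show ?thesis unfolding c_def by simp
  qed
qed

definition small_oscillation :: "(real \<Rightarrow> real measure) \<Rightarrow> real set \<Rightarrow> real \<Rightarrow> real \<Rightarrow> bool" where
  "small_oscillation Y P T \<epsilon> \<longleftrightarrow>
     (\<forall>x y. 0 \<le> x \<and> x \<le> y \<and> y \<le> T \<and> (\<forall>p\<in>P. \<not> (x < p \<and> p \<le> y)) \<longrightarrow> dBL (Y x) (Y y) < \<epsilon>)"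

lemma cadlag_local_oscillation:
  assumes Y: "Y \<in> cadlag" and \<epsilon>: "\<epsilon> > 0" and t: "t \<ge> 0"
  shows "\<exists>\<delta>>0. (\<forall>x y. t \<le> x \<and> x < t + \<delta> \<and> t \<le> y \<and> y < t + \<delta> \<longrightarrow> dBL (Y x) (Y y) < \<epsilon>) \<and>
    (\<forall>x y. 0 \<le> x \<and> t - \<delta> < x \<and> x < t \<and> 0 \<le> y \<and> t - \<delta> < y \<and> y < t \<longrightarrow> dBL (Y x) (Y y) < \<epsilon>)"
proof -
  have MF: "\<And>r. r \<ge> 0 \<Longrightarrow> Y r \<in> MF" by (rule cadlagD(1)[OF Y])
  have half: "dBL (Y x) (Y y) < \<epsilon>" if "x \<ge> 0" "y \<ge> 0" "m \<in> MF" "dBL (Y x) m < \<epsilon>/2" "dBL (Y y) m < \<epsilon>/2"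
    for x y m
    using dBL_triangle[OF MF[OF that(1)] that(3) MF[OF that(2)]] that(4,5) dBL_commute[of m "Y y"]
    by linarith
  obtain \<delta>1 where \<delta>1: "\<delta>1 > 0" "\<forall>r. t \<le> r \<and> r < t + \<delta>1 \<longrightarrow> dBL (Y r) (Y t) < \<epsilon>/2"
    using right_cont_atD[OF cadlagD(2)[OF Y t], of "\<epsilon>/2"] \<epsilon> by auto
  obtain \<delta>2 m where \<delta>2: "\<delta>2 > 0" "m \<in> MF" "\<forall>r. 0 \<le> r \<and> t - \<delta>2 < r \<and> r < t \<longrightarrow> dBL (Y r) m < \<epsilon>/2"
  proof (cases "t = 0")
    case True then show ?thesis using that[of 1 zeroM] zeroM_in_MF by auto
  next
    case False
    then obtain m where "m \<in> MF" "left_lim_at Y t m" using cadlagD(3)[OF Y, of t] t by auto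
    then show ?thesis using that left_lim_atD[of Y t m "\<epsilon>/2"] \<epsilon> by auto
  qed
  show ?thesis
  proof (intro exI[of _ "min \<delta>1 \<delta>2"] conjI allI impI)
    fix x y assume "t \<le> x \<and> x < t + min \<delta>1 \<delta>2 \<and> t \<le> y \<and> y < t + min \<delta>1 \<delta>2"
    then show "dBL (Y x) (Y y) < \<epsilon>" using half[of x y "Y t"] \<delta>1(2) t MF[OF t] by auto
  next
    fix x y assume "0 \<le> x \<and> t - min \<delta>1 \<delta>2 < x \<and> x < t \<and> 0 \<le> y \<and> t - min \<delta>1 \<delta>2 < y \<and> y < t"
    then show "dBL (Y x) (Y y) < \<epsilon>" using half[of x y m] \<delta>2(2,3) by auto
  qed (use \<delta>1(1) \<delta>2(1) in auto)
qed

lemma small_oscillation_if_cover: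
  assumes cover: "{0..T} \<subseteq> (\<Union>t\<in>C. ball t (\<delta> t))"
    and right: "\<And>t x y. t \<in> C \<Longrightarrow> t \<le> x \<Longrightarrow> x < t + \<delta> t \<Longrightarrow> t \<le> y \<Longrightarrow> y < t + \<delta> t \<Longrightarrow>
       dBL (Y x) (Y y) < \<epsilon>"
    and left: "\<And>t x y. t \<in> C \<Longrightarrow> 0 \<le> x \<Longrightarrow> t - \<delta> t < x \<Longrightarrow> x < t \<Longrightarrow> 0 \<le> y \<Longrightarrow> t - \<delta> t < y \<Longrightarrow>
       y < t \<Longrightarrow> dBL (Y x) (Y y) < \<epsilon>"
  shows "small_oscillation Y (C \<union> (\<lambda>t. t + \<delta> t) ` C) T \<epsilon>"
  unfolding small_oscillation_def
proof (intro allI impI, elim conjE)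
  fix x y assume x: "0 \<le> x" "x \<le> y" "y \<le> T"
    and noP: "\<forall>p\<in>C \<union> (\<lambda>t. t + \<delta> t) ` C. \<not> (x < p \<and> p \<le> y)"
  have "x \<in> {0..T}" using x by simp
  then have "x \<in> (\<Union>t\<in>C. ball t (\<delta> t))" using cover by blast
  then obtain t where t: "t \<in> C" "dist t x < \<delta> t" by auto
  show "dBL (Y x) (Y y) < \<epsilon>"
  proof (cases "x < t")
    case True
    have "t - \<delta> t < x" using t(2) True by (simp add: dist_real_def)
    moreover have "\<not> (x < t \<and> t \<le> y)" using bspec[OF noP, of t] t(1) by blast
    ultimately show ?thesis using left[OF t(1), of x y] True x by linarith
  next
    case False
    have "x < t + \<delta> t" using False t(2) by (simp add: dist_real_def)
    moreover have "\<not> (x < t + \<delta> t \<and> t + \<delta> t \<le> y)" using bspec[OF noP, of "t + \<delta> t"] t(1) by blast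
    ultimately show ?thesis using right[OF t(1), of x y] False x by linarith
  qed
qed

lemma cadlag_small_oscillation:
  assumes Y: "Y \<in> cadlag" and \<epsilon>: "\<epsilon> > 0"
  obtains P where "finite P" "small_oscillation Y P T \<epsilon>"
proof -
  have "\<forall>t\<in>{0..T}. \<exists>\<delta>>0. (\<forall>x y. t \<le> x \<and> x < t + \<delta> \<and> t \<le> y \<and> y < t + \<delta> \<longrightarrow> dBL (Y x) (Y y) < \<epsilon>) \<and>
      (\<forall>x y. 0 \<le> x \<and> t - \<delta> < x \<and> x < t \<and> 0 \<le> y \<and> t - \<delta> < y \<and> y < t \<longrightarrow> dBL (Y x) (Y y) < \<epsilon>)"
    using cadlag_local_oscillation[OF Y \<epsilon>] by simp
  from bchoice[OF this] obtain \<delta> where \<delta>: "\<forall>t\<in>{0..T}. \<delta> t > 0 \<and>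
      (\<forall>x y. t \<le> x \<and> x < t + \<delta> t \<and> t \<le> y \<and> y < t + \<delta> t \<longrightarrow> dBL (Y x) (Y y) < \<epsilon>) \<and>
      (\<forall>x y. 0 \<le> x \<and> t - \<delta> t < x \<and> x < t \<and> 0 \<le> y \<and> t - \<delta> t < y \<and> y < t \<longrightarrow> dBL (Y x) (Y y) < \<epsilon>)"
    ..
  have "{0..T} \<subseteq> (\<Union>t\<in>{0..T}. ball t (\<delta> t))"
  proof
    fix x assume "x \<in> {0..T}"
    then show "x \<in> (\<Union>t\<in>{0..T}. ball t (\<delta> t))" using \<delta> by (intro UN_I[of x]) auto
  qed
  then obtain C where C: "C \<subseteq> {0..T}" "finite C" "{0..T} \<subseteq> (\<Union>t\<in>C. ball t (\<delta> t))"
    by (rule compactE_image[where S="{0..T}" and C="{0..T}" and f="\<lambda>t. ball t (\<delta> t)", rotated 2]) auto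
  have "small_oscillation Y (C \<union> (\<lambda>t. t + \<delta> t) ` C) T \<epsilon>"
    using C(3) by (rule small_oscillation_if_cover) (use \<delta> C(1) in blast)+
  moreover have "finite (C \<union> (\<lambda>t. t + \<delta> t) ` C)" using C(2) by simp
  ultimately show ?thesis using that by blast
qed

lemma dSu_le_twice:
  assumes XMF: "\<And>t. t \<ge> 0 \<Longrightarrow> X t \<in> MF" and YMF: "\<And>t. t \<ge> 0 \<Longrightarrow> Y t \<in> MF"
    and l: "l \<in> LamSet" and dev: "\<And>t. t \<ge> 0 \<Longrightarrow> \<bar>l t - t\<bar> \<le> \<eta>"
    and close: "\<And>t. t \<ge> 0 \<Longrightarrow> dBL (X t) (Y (l t)) \<le> \<epsilon>" and u: "u \<ge> 0"
    and osc: "\<And>a b. 0 \<le> a \<Longrightarrow> 0 \<le> b \<Longrightarrow> \<bar>a - u\<bar> \<le> \<eta> \<Longrightarrow> \<bar>b - u\<bar> \<le> \<eta> \<Longrightarrow> dBL (Y a) (Y b) < \<epsilon>"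
  shows "dSu X Y l u \<le> 2 * \<epsilon>"
proof (rule dSu_leI)
  fix t :: real assume t: "t \<ge> 0"
  have lt: "0 \<le> l t" and lu: "0 \<le> l u" using LamSet_nonneg[OF l] t u by auto
  have \<epsilon>: "0 \<le> \<epsilon>" using close[OF t] dBL_nonneg[OF XMF[OF t] YMF[OF lt]] by linarith
  have via: "dBL (X a) (Y b) \<le> 2 * \<epsilon>" if "a \<ge> 0" "b \<ge> 0" "\<bar>l a - u\<bar> \<le> \<eta>" "\<bar>b - u\<bar> \<le> \<eta>" for a b
  proof -
    have la: "0 \<le> l a" using LamSet_nonneg[OF l] that(1) .
    have "dBL (X a) (Y b) \<le> dBL (X a) (Y (l a)) + dBL (Y (l a)) (Y b)"
      using dBL_triangle[OF XMF YMF YMF] that la by blast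
    then show ?thesis using close[OF that(1)] osc[OF la that(2-4)] by linarith
  qed
  consider "t \<le> u" "l t \<le> u" | "t \<le> u" "u < l t" | "u < t" "l t \<le> u" | "u < t" "u < l t" by linarith
  then have "dBL (X (min t u)) (Y (min (l t) u)) \<le> 2 * \<epsilon>"
  proof cases
    case 1 then show ?thesis using close[OF t] \<epsilon> by simp
  next
    case 2 then show ?thesis using via[OF t u] dev[OF t] by (simp add: abs_le_iff)
  next
    case 3
    then have "l u \<le> l t" using LamSet_mono[OF l u] by simp
    then show ?thesis using 3 via[OF u lt] dev[OF u] by (simp add: abs_le_iff)
  next
    case 4 then show ?thesis using via[OF u u] dev[OF u] by simp
  qed
  then show "min 1 (dBL (X (min t u)) (Y (min (l t) u))) \<le> 2 * \<epsilon>" by linarith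
qed

lemma nn_integral_dS_majorant:
  assumes P: "finite P" and c: "c \<ge> 0" and \<eta>: "\<eta> \<ge> 0"
  shows "(\<integral>\<^sup>+u. ennreal (exp (- u) * c) * indicator {0..} u + (\<Sum>p\<in>P. indicator {p - \<eta>..p + \<eta>} u)
            + ennreal (exp (- u)) * indicator {T - \<eta>..} u \<partial>lborel)
         = ennreal (c + 2 * \<eta> * card P + exp (- (T - \<eta>)))"
proof -
  have first: "(\<integral>\<^sup>+u. ennreal (exp (- u) * c) * indicator {0..} u \<partial>lborel) = ennreal c"
    using nn_integral_cmult[of "\<lambda>u. ennreal (exp (- u)) * indicator {0..} u" lborel "ennreal c"]
      nn_integral_exp_minus_atLeast[of 0] c
    by (simp add: ennreal_mult' mult_ac)
  have "(\<integral>\<^sup>+u. (\<Sum>p\<in>P. indicator {p - \<eta>..p + \<eta>} u) \<partial>lborel) = (\<Sum>p\<in>P. ennreal (2 * \<eta>))"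
    using \<eta> by (subst nn_integral_sum) (auto simp: nn_integral_indicator)
  also have "\<dots> = ennreal (2 * \<eta> * card P)"
    using \<eta> by (simp add: ennreal_mult' mult.commute ennreal_of_nat_eq_real_of_nat)
  finally have second: "(\<integral>\<^sup>+u. (\<Sum>p\<in>P. indicator {p - \<eta>..p + \<eta>} u) \<partial>lborel) = ennreal (2 * \<eta> * card P)" .
  show ?thesis
    using first second nn_integral_exp_minus_atLeast[of "T - \<eta>"] c \<eta>
    by (simp add: nn_integral_add ennreal_plus)
qed

lemma small_oscillation_near:
  assumes osc: "small_oscillation Y P T \<epsilon>" and u: "u + \<eta> \<le> T" "\<forall>p\<in>P. p \<le> u - \<eta> \<or> u + \<eta> < p"
    and ab: "0 \<le> a" "0 \<le> b" "\<bar>a - u\<bar> \<le> \<eta>" "\<bar>b - u\<bar> \<le> \<eta>"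
  shows "dBL (Y a) (Y b) < \<epsilon>"
proof -
  have ordered: "dBL (Y x) (Y y) < \<epsilon>" if "0 \<le> x" "x \<le> y" "\<bar>x - u\<bar> \<le> \<eta>" "\<bar>y - u\<bar> \<le> \<eta>" for x y
    using osc u that unfolding small_oscillation_def abs_le_iff by force
  show ?thesis
  proof (cases "a \<le> b")
    case False
    then show ?thesis using ordered[of b a] ab dBL_commute[of "Y a" "Y b"] by simp
  qed (use ordered ab in blast)
qed

lemma dS_le_if_close:
  assumes XMF: "\<And>t. t \<ge> 0 \<Longrightarrow> X t \<in> MF" and YMF: "\<And>t. t \<ge> 0 \<Longrightarrow> Y t \<in> MF"
    and l: "l \<in> LamSet" and dev: "\<And>t. t \<ge> 0 \<Longrightarrow> \<bar>l t - t\<bar> \<le> \<eta>" and \<eta>: "\<eta> \<ge> 0"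
    and close: "\<And>t. t \<ge> 0 \<Longrightarrow> dBL (X t) (Y (l t)) \<le> \<epsilon>"
    and P: "finite P" and osc: "small_oscillation Y P T \<epsilon>"
  shows "dS X Y \<le> max (gammaL l) (2 * \<epsilon> + 2 * \<eta> * card P + exp (- (T - \<eta>)))"
proof -
  have \<epsilon>: "0 \<le> \<epsilon>"
    using close[of 0] dBL_nonneg[OF XMF YMF] LamSet_nonneg[OF l, of 0] by fastforce
  let ?G = "\<lambda>u. ennreal (exp (- u) * (2 * \<epsilon>)) * indicator {0..} u + (\<Sum>p\<in>P. indicator {p - \<eta>..p + \<eta>} u)
            + ennreal (exp (- u)) * indicator {T - \<eta>..} u"
  have "indicator {0..} u * ennreal (exp (- u) * dSu X Y l u) \<le> ?G u" for u
  proof (cases "u \<ge> 0")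
    case u: True
    have small: "ennreal (exp (- u) * dSu X Y l u) \<le> ennreal (exp (- u))"
      using dSu_le_1[of X Y l u] by (intro ennreal_leI) simp
    consider "u + \<eta> \<le> T" "\<forall>p\<in>P. p \<le> u - \<eta> \<or> u + \<eta> < p" | "T < u + \<eta>"
      | p where "p \<in> P" "u - \<eta> < p" "p \<le> u + \<eta>" by force
    then have "ennreal (exp (- u) * dSu X Y l u) \<le> ?G u"
    proof cases
      case 1
      have "dSu X Y l u \<le> 2 * \<epsilon>"
        using small_oscillation_near[OF osc 1]
        by (intro dSu_le_twice[where X=X and Y=Y and l=l and \<eta>=\<eta> and u=u] XMF YMF l dev close u)
      then have "ennreal (exp (- u) * dSu X Y l u) \<le> ennreal (exp (- u) * (2 * \<epsilon>)) * indicator {0..} u"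
        using u by (simp add: ennreal_leI)
      then show ?thesis by (simp add: add.assoc add_increasing2)
    next
      case 2
      then have "ennreal (exp (- u)) \<le> ennreal (exp (- u)) * indicator {T - \<eta>..} u" by simp
      also have "\<dots> \<le> ?G u" by (rule add_increasing) simp_all
      finally show ?thesis using small by (rule order_trans[rotated])
    next
      case 3
      then have "ennreal (exp (- u)) \<le> 1" using u by simp
      also have "1 \<le> (\<Sum>p\<in>P. indicator {p - \<eta>..p + \<eta>} u :: ennreal)"
        using member_le_sum[OF 3(1), of "\<lambda>p. indicator {p - \<eta>..p + \<eta>} u :: ennreal"] 3 P by simp
      also have "\<dots> \<le> ?G u" by (intro add_increasing2 add_increasing) simp_all
      finally show ?thesis using small by (rule order_trans[rotated])
    qed
    then show ?thesis using u by simp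
  qed simp
  then have "dSI X Y l \<le> (\<integral>\<^sup>+u. ?G u \<partial>lborel)" unfolding dSI_def by (rule nn_integral_mono)
  also have "\<dots> = ennreal (2 * \<epsilon> + 2 * \<eta> * card P + exp (- (T - \<eta>)))"
    using \<epsilon> by (intro nn_integral_dS_majorant P \<eta>) simp
  finally have "enn2real (dSI X Y l) \<le> 2 * \<epsilon> + 2 * \<eta> * card P + exp (- (T - \<eta>))"
    using \<epsilon> \<eta> by (intro enn2real_leI) auto
  then show ?thesis using dS_le[OF l, of X Y] by linarith
qed

lemma dS_less_if_close:
  assumes Y: "Y \<in> cadlag" and e: "e > 0"
  obtains \<eta> where "\<eta> > 0"
    "\<And>X l. (\<And>t. t \<ge> 0 \<Longrightarrow> X t \<in> MF) \<Longrightarrow> l \<in> LamSet \<Longrightarrow> gammaL l < e \<Longrightarrow>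
       (\<And>t. t \<ge> 0 \<Longrightarrow> \<bar>l t - t\<bar> \<le> \<eta>) \<Longrightarrow> (\<And>t. t \<ge> 0 \<Longrightarrow> dBL (X t) (Y (l t)) \<le> e / 4) \<Longrightarrow>
       dS X Y < e"
proof -
  define T where "T = 1 + max 0 (ln (8 / e))"
  obtain P where P: "finite P" "small_oscillation Y P T (e / 4)"
    using cadlag_small_oscillation[OF Y, of "e / 4" T] e by auto
  define \<eta> where "\<eta> = min 1 (e / (16 * (card P + 1)))"
  have \<eta>: "0 < \<eta>" "\<eta> \<le> 1" unfolding \<eta>_def using e by auto
  have "\<eta> * card P \<le> e / (16 * (card P + 1)) * card P"
    unfolding \<eta>_def by (intro mult_right_mono) auto
  also have "\<dots> \<le> e / 16" using e by (simp add: field_simps)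
  finally have grid: "2 * \<eta> * card P \<le> e / 8" by simp
  have "exp (- (T - \<eta>)) \<le> exp (- max 0 (ln (8 / e)))" unfolding T_def using \<eta> by simp
  also have "\<dots> \<le> e / 8"
  proof (cases "ln (8 / e) \<ge> 0")
    case True then show ?thesis using e by (simp add: exp_minus max_def)
  next
    case False
    then have "8 < e" using e by (simp add: ln_less_zero_iff field_simps)
    then show ?thesis using False by (simp add: max_def)
  qed
  finally have tail: "exp (- (T - \<eta>)) \<le> e / 8" .
  show ?thesis
  proof (rule that[OF \<eta>(1)])
    fix X l assume XMF: "\<And>t. t \<ge> 0 \<Longrightarrow> X t \<in> MF" and l: "l \<in> LamSet" "gammaL l < e"
      and dev: "\<And>t. t \<ge> 0 \<Longrightarrow> \<bar>l t - t\<bar> \<le> \<eta>" and close: "\<And>t. t \<ge> 0 \<Longrightarrow> dBL (X t) (Y (l t)) \<le> e / 4"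
    have "dS X Y \<le> max (gammaL l) (2 * (e / 4) + 2 * \<eta> * card P + exp (- (T - \<eta>)))"
      using \<eta>(1) by (intro dS_le_if_close[OF XMF cadlagD(1)[OF Y] l(1) dev _ close P]) auto
    then show "dS X Y < e" using l(2) grid tail e by linarith
  qed
qed

section \<open>Continuity of grafting\<close>

lemma d0_close_time_change:
  assumes mu: "mu \<in> D0" and \<delta>: "\<delta> > 0"
  obtains d where "d > 0"
    "\<And>mu'. mu' \<in> D0 \<Longrightarrow> d0 mu' mu < d \<Longrightarrow> \<exists>l\<in>LamSet. gammaL l < \<delta> \<and>
       \<bar>lifetime mu' - lifetime mu\<bar> < \<delta> \<and> (\<forall>r\<ge>0. dBL (mu' r) (mu (l r)) \<le> \<delta>)"
proof -
  define \<sigma> where "\<sigma> = lifetime mu"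
  have \<sigma>: "0 \<le> \<sigma>" unfolding \<sigma>_def by (rule lifetime_nonneg[OF D0D(2)[OF mu]])
  define d where "d = min \<delta> (1/2) / exp (\<sigma> + 3)"
  have "1 \<le> exp (\<sigma> + 3)" using \<sigma> by simp
  then have "min \<delta> (1/2) * 1 \<le> min \<delta> (1/2) * exp (\<sigma> + 3)" using \<delta> by (intro mult_left_mono) auto
  then have d_le: "d \<le> min \<delta> (1/2)" unfolding d_def by (simp only: pos_divide_le_eq[OF exp_gt_zero] mult_1_right)
  have d: "0 < d" "d \<le> 1" "d \<le> \<delta>" "d * exp (\<sigma> + 3) \<le> min \<delta> (1/2)"
    using d_le \<delta> unfolding d_def by auto
  show ?thesis
  proof (rule that[OF d(1)])
    fix mu' assume mu': "mu' \<in> D0" and close: "d0 mu' mu < d"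
    define \<sigma>' where "\<sigma>' = lifetime mu'"
    have \<sigma>': "0 \<le> \<sigma>'" unfolding \<sigma>'_def by (rule lifetime_nonneg[OF D0D(2)[OF mu']])
    have dS: "dS mu' mu < d" and life: "\<bar>\<sigma>' - \<sigma>\<bar> < d"
      using close dS_nonneg[of mu' mu] unfolding d0_def \<sigma>_def \<sigma>'_def by linarith+
    obtain l where l: "l \<in> LamSet" "gammaL l < d" "dSI mu' mu l < ennreal d" by (rule dS_lessE[OF dS])
    define U where "U = max \<sigma> \<sigma>' + 1"
    have U: "0 \<le> U" "U + 1 \<le> \<sigma> + 3"
      unfolding U_def using \<sigma> life d(2) by auto
    have "dBL (mu' r) (mu (l r)) \<le> \<delta>" if r: "r \<ge> 0" for r
    proof -
      have "min 1 (dBL (mu' r) (mu (l r))) \<le> d * exp (U + 1)"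
      proof (rule min_1_dBL_le_dSI[OF U(1) _ _ l(3) r])
        show "mu' t = zeroM" if "U \<le> t" for t
          using eq_zeroM_after_lifetime[OF D0D(2)[OF mu']] that unfolding U_def \<sigma>'_def by simp
        show "mu t = zeroM" if "U \<le> t" for t
          using eq_zeroM_after_lifetime[OF D0D(2)[OF mu]] that unfolding U_def \<sigma>_def by simp
      qed
      also have "\<dots> \<le> d * exp (\<sigma> + 3)" using U(2) d(1) by simp
      also have "\<dots> \<le> min \<delta> (1/2)" by (rule d(4))
      finally show ?thesis by (simp add: min_def split: if_splits)
    qed
    then show "\<exists>l\<in>LamSet. gammaL l < \<delta> \<and> \<bar>lifetime mu' - lifetime mu\<bar> < \<delta> \<and>
        (\<forall>r\<ge>0. dBL (mu' r) (mu (l r)) \<le> \<delta>)"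
      using l life d unfolding \<sigma>_def \<sigma>'_def by (intro bexI[OF _ l(1)]) auto
  qed
qed

lemma dBL_graft_near_junction:
  assumes nondeg: "\<not> (deadset nu \<noteq> {} \<and> lifetime nu \<le> s)" and nu: "nu \<in> cadlag" and s: "s \<ge> 0"
    and m: "m \<in> D0" and b: "b \<ge> 0"
    and m_small: "\<And>r. b \<le> r \<Longrightarrow> r < lifetime m \<Longrightarrow> dBL (m r) zeroM \<le> \<epsilon>"
    and nu_close: "\<And>r. s \<le> r \<Longrightarrow> r \<le> s + \<kappa> \<Longrightarrow> dBL (nu r) (nu s) \<le> \<epsilon>"
    and t: "s + b \<le> t" "t \<le> s + lifetime m + \<kappa>"
  shows "dBL (graft nu s m t) (nu s) \<le> \<epsilon>"
proof (cases "t < s + lifetime m")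
  case True
  have "dBL (graftM (nu s) (m (t - s))) (nu s) \<le> dBL (m (t - s)) zeroM"
    using b t by (intro dBL_graftM_le cadlagD(1)[OF nu s] cadlagD(1)[OF D0D(1)[OF m]]) simp
  also have "\<dots> \<le> \<epsilon>" using m_small True t by simp
  finally show ?thesis using True b t by (simp add: graft_eq_piecewise[OF nondeg])
next
  case False
  then show ?thesis
    using nu_close[of "t - lifetime m"] t s lifetime_nonneg[OF D0D(2)[OF m]]
    by (simp add: graft_eq_piecewise[OF nondeg])
qed

text \<open>Matches the graft of an excursion of lifetime sigma' to that of one of lifetime sigma: the
  identity before s, then l on [s, s + a], a linear bridge from [s + a, s + sigma' + kappa] onto
  [s + l a, s + sigma + kappa], and the shift by sigma - sigma' afterwards.\<close>

definition graft_time_change ::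
    "(real \<Rightarrow> real) \<Rightarrow> real \<Rightarrow> real \<Rightarrow> real \<Rightarrow> real \<Rightarrow> real \<Rightarrow> real \<Rightarrow> real" where
  "graft_time_change l s a \<sigma>' \<sigma> \<kappa> t =
     (if t \<le> s then t else if t \<le> s + a then s + l (t - s)
      else if t \<le> s + \<sigma>' + \<kappa> then s + l a + (t - s - a) * ((\<sigma> + \<kappa> - l a) / (\<sigma>' + \<kappa> - a))
      else t + \<sigma> - \<sigma>')"

lemma graft_time_change_start: "t \<le> s \<Longrightarrow> graft_time_change l s a \<sigma>' \<sigma> \<kappa> t = t"
  unfolding graft_time_change_def by simp

lemma graft_time_change_inner:
  "l 0 = 0 \<Longrightarrow> s \<le> t \<Longrightarrow> t \<le> s + a \<Longrightarrow> graft_time_change l s a \<sigma>' \<sigma> \<kappa> t = s + l (t - s)"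
  unfolding graft_time_change_def by auto

lemma graft_time_change_bridge:
  assumes "l 0 = 0" "0 \<le> a" "s + a \<le> t" "t \<le> s + \<sigma>' + \<kappa>"
  shows "graft_time_change l s a \<sigma>' \<sigma> \<kappa> t = s + l a + (t - s - a) * ((\<sigma> + \<kappa> - l a) / (\<sigma>' + \<kappa> - a))"
  using assms unfolding graft_time_change_def by auto

lemma graft_time_change_tail:
  assumes "l 0 = 0" "0 \<le> a" "a \<le> \<sigma>'" "\<kappa> > 0" "s + \<sigma>' + \<kappa> \<le> t"
  shows "graft_time_change l s a \<sigma>' \<sigma> \<kappa> t = t + \<sigma> - \<sigma>'"
proof (cases "t = s + \<sigma>' + \<kappa>")
  case True
  then show ?thesis using graft_time_change_bridge[of l a, OF assms(1,2), of s t \<sigma>' \<kappa> \<sigma>] assms(3,4) by simp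
qed (use assms in \<open>auto simp: graft_time_change_def\<close>)

lemma graft_time_change_LamSet:
  assumes l: "l \<in> LamSet" "gammaL l \<le> g" and s: "s \<ge> 0" and a: "0 \<le> a" "a \<le> \<sigma>'" and \<kappa>: "\<kappa> > 0"
    and slope: "exp (- g) \<le> (\<sigma> + \<kappa> - l a) / (\<sigma>' + \<kappa> - a)" "(\<sigma> + \<kappa> - l a) / (\<sigma>' + \<kappa> - a) \<le> exp g"
  shows "graft_time_change l s a \<sigma>' \<sigma> \<kappa> \<in> LamSet" "gammaL (graft_time_change l s a \<sigma>' \<sigma> \<kappa>) \<le> g"
proof -
  let ?L = "graft_time_change l s a \<sigma>' \<sigma> \<kappa>"
  define k where "k = (\<sigma> + \<kappa> - l a) / (\<sigma>' + \<kappa> - a)"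
  have l0: "l 0 = 0" by (rule LamSet_zero[OF l(1)])
  have bridge: "?L t = (s + l a - (s + a) * k) + k * t" if "s + a \<le> t" "t \<le> s + \<sigma>' + \<kappa>" for t
    using graft_time_change_bridge[of l a s t \<sigma>' \<kappa> \<sigma>, OF l0 a(1) that] unfolding k_def[symmetric]
    by (simp add: algebra_simps)
  have g: "exp (- g) \<le> 1" "1 \<le> exp g" using gammaL_nonneg[OF l(1)] l(2) by auto
  have "log_slopes_le g ?L {0..s}"
    by (rule log_slopes_le_affine[of _ _ 0 1]) (use g graft_time_change_start in auto)
  moreover have "log_slopes_le g ?L {s..s + a}"
    using log_slopes_le_mono[OF l(2) log_slopes_le_gammaL[OF l(1)]]
    by (rule log_slopes_le_shift[where c = s]) (auto simp: graft_time_change_inner[of l, OF l0])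
  moreover have "log_slopes_le g ?L {s + a..s + \<sigma>' + \<kappa>}"
    by (rule log_slopes_le_affine[of _ _ "s + l a - (s + a) * k" k]) (use slope bridge in \<open>auto simp: k_def\<close>)
  moreover have "log_slopes_le g ?L {s + \<sigma>' + \<kappa>..}"
    by (rule log_slopes_le_affine[of _ _ "\<sigma> - \<sigma>'" 1]) (use g graft_time_change_tail[of l, OF l0 a \<kappa>] in auto)
  ultimately have "log_slopes_le g ?L ((({0..s} \<union> {s..s + a}) \<union> {s + a..s + \<sigma>' + \<kappa>}) \<union> {s + \<sigma>' + \<kappa>..})"
    using s a \<kappa> by (intro log_slopes_le_Un[where q = s] log_slopes_le_Un[where q = "s + a"]
        log_slopes_le_Un[where q = "s + \<sigma>' + \<kappa>"]) auto
  moreover have "(({0..s} \<union> {s..s + a}) \<union> {s + a..s + \<sigma>' + \<kappa>}) \<union> {s + \<sigma>' + \<kappa>..} = {0..}"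
    using s a \<kappa> by auto
  ultimately have "log_slopes_le g ?L {0..}" by simp
  moreover have "?L 0 = 0" using s by (simp add: graft_time_change_start)
  ultimately show "?L \<in> LamSet" "gammaL ?L \<le> g" using LamSet_if_log_slopes_le by blast+
qed

lemma abs_graft_time_change_minus_le:
  assumes l0: "l 0 = 0" and a: "0 \<le> a" "a \<le> \<sigma>'" and \<kappa>: "\<kappa> > 0"
    and l_dev: "\<And>r. 0 \<le> r \<Longrightarrow> r \<le> a \<Longrightarrow> \<bar>l r - r\<bar> \<le> \<delta>" and \<sigma>_dev: "\<bar>\<sigma> - \<sigma>'\<bar> \<le> \<delta>"
  shows "\<bar>graft_time_change l s a \<sigma>' \<sigma> \<kappa> t - t\<bar> \<le> \<delta>"
proof -
  have \<delta>: "\<delta> \<ge> 0" using \<sigma>_dev by linarith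
  consider "t \<le> s" | "s \<le> t" "t \<le> s + a" | "s + a \<le> t" "t \<le> s + \<sigma>' + \<kappa>" | "s + \<sigma>' + \<kappa> \<le> t"
    by linarith
  then show ?thesis
  proof cases
    case 1 then show ?thesis using \<delta> by (simp add: graft_time_change_start)
  next
    case 2 then show ?thesis using l_dev[of "t - s"] by (simp add: graft_time_change_inner[of l, OF l0])
  next
    case 3
    define D where "D = \<sigma>' + \<kappa> - a"
    define \<theta> where "\<theta> = (t - s - a) / D"
    have D: "D > 0" unfolding D_def using a \<kappa> by simp
    have \<theta>: "0 \<le> \<theta>" "\<theta> \<le> 1" unfolding \<theta>_def using 3 D by (auto simp: D_def field_simps)
    have "(t - s - a) * ((\<sigma> + \<kappa> - l a) / D) = \<theta> * (\<sigma> + \<kappa> - l a)" unfolding \<theta>_def by simp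
    moreover have "t - s - a = \<theta> * D" using D unfolding \<theta>_def by simp
    ultimately have "graft_time_change l s a \<sigma>' \<sigma> \<kappa> t - t = (l a - a) + \<theta> * (\<sigma> + \<kappa> - l a) - \<theta> * D"
      using graft_time_change_bridge[of l a s t \<sigma>' \<kappa> \<sigma>, OF l0 a(1) 3] unfolding D_def by simp
    also have "\<dots> = (1 - \<theta>) * (l a - a) + \<theta> * (\<sigma> - \<sigma>')" unfolding D_def by (simp add: algebra_simps)
    also have "\<bar>\<dots>\<bar> \<le> (1 - \<theta>) * \<bar>l a - a\<bar> + \<theta> * \<bar>\<sigma> - \<sigma>'\<bar>"
      using \<theta> by (metis abs_mult abs_of_nonneg abs_triangle_ineq diff_ge_0_iff_ge)
    also have "\<dots> \<le> (1 - \<theta>) * \<delta> + \<theta> * \<delta>"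
      using l_dev[of a] a \<sigma>_dev \<theta> by (intro add_mono mult_left_mono) auto
    finally show ?thesis by (simp add: algebra_simps)
  next
    case 4 then show ?thesis using \<sigma>_dev by (simp add: graft_time_change_tail[of l, OF l0 a \<kappa>])
  qed
qed

lemma dBL_graft_bridge:
  assumes nondeg: "\<not> (deadset nu \<noteq> {} \<and> lifetime nu \<le> s)" and nu: "nu \<in> cadlag" and s: "s \<ge> 0"
    and mu: "mu \<in> D0" and mu': "mu' \<in> D0"
    and l: "l \<in> LamSet" and a: "0 \<le> a" "a \<le> lifetime mu'" and la: "lifetime mu - \<rho> < l a"
    and close: "\<And>r. 0 \<le> r \<Longrightarrow> dBL (mu' r) (mu (l r)) \<le> \<epsilon>"
    and mu_small: "\<And>r. 0 \<le> r \<Longrightarrow> lifetime mu - \<rho> < r \<Longrightarrow> dBL (mu r) zeroM \<le> \<epsilon>"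
    and nu_close: "\<And>r. s \<le> r \<Longrightarrow> r \<le> s + \<kappa> \<Longrightarrow> dBL (nu r) (nu s) \<le> \<epsilon>"
    and t: "s + a \<le> t" "t \<le> s + lifetime mu' + \<kappa>" and v: "s + l a \<le> v" "v \<le> s + lifetime mu + \<kappa>"
  shows "dBL (graft nu s mu' t) (graft nu s mu v) \<le> 3 * \<epsilon>"
proof -
  have la0: "0 \<le> l a" by (rule LamSet_nonneg[OF l a(1)])
  have MF: "\<And>r. r \<ge> 0 \<Longrightarrow> mu r \<in> MF" "\<And>r. r \<ge> 0 \<Longrightarrow> mu' r \<in> MF"
    using cadlagD(1) D0D(1) mu mu' by blast+
  have "0 \<le> dBL (mu' 0) (mu (l 0))" by (rule dBL_nonneg[OF MF(2) MF(1)]) (simp_all add: LamSet_zero[OF l])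
  then have \<epsilon>: "0 \<le> \<epsilon>" using close[of 0] by linarith
  have "dBL (graft nu s mu' t) (nu s) \<le> 2 * \<epsilon>"
  proof (rule dBL_graft_near_junction[OF nondeg nu s mu' a(1) _ _ t])
    show "dBL (mu' r) zeroM \<le> 2 * \<epsilon>" if "a \<le> r" "r < lifetime mu'" for r
    proof -
      have r: "0 \<le> r" "0 \<le> l r" using a that LamSet_nonneg[OF l, of r] by auto
      have "l a \<le> l r" using LamSet_mono[OF l a(1) that(1)] .
      then have "dBL (mu (l r)) zeroM \<le> \<epsilon>" using mu_small r la by auto
      then show ?thesis using dBL_triangle[OF MF(2)[OF r(1)] MF(1)[OF r(2)] zeroM_in_MF] close[OF r(1)] by linarith
    qed
    show "dBL (nu r) (nu s) \<le> 2 * \<epsilon>" if "s \<le> r" "r \<le> s + \<kappa>" for r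
      using nu_close[OF that] \<epsilon> by linarith
  qed
  moreover have "dBL (graft nu s mu v) (nu s) \<le> \<epsilon>"
    using v la0 la mu_small nu_close by (intro dBL_graft_near_junction[OF nondeg nu s mu]) auto
  moreover have "graft nu s mu' t \<in> MF" "graft nu s mu v \<in> MF"
    using t v a s la0 by (auto intro!: graft_in_MF[OF nondeg nu s] mu mu')
  ultimately show ?thesis
    using dBL_triangle[OF _ cadlagD(1)[OF nu s], of "graft nu s mu' t" "graft nu s mu v"]
      dBL_commute[of "nu s" "graft nu s mu v"] by linarith
qed

lemma dBL_graft_graft_time_change:
  assumes nondeg: "\<not> (deadset nu \<noteq> {} \<and> lifetime nu \<le> s)" and nu: "nu \<in> cadlag" and s: "s \<ge> 0"
    and mu: "mu \<in> D0" and mu': "mu' \<in> D0"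
    and l: "l \<in> LamSet" and a: "0 \<le> a" "a \<le> lifetime mu'" and \<kappa>: "\<kappa> > 0"
    and lam: "graft_time_change l s a (lifetime mu') (lifetime mu) \<kappa> \<in> LamSet"
    and la: "0 < a \<Longrightarrow> l a < lifetime mu" "lifetime mu - \<rho> < l a"
    and close: "\<And>r. 0 \<le> r \<Longrightarrow> dBL (mu' r) (mu (l r)) \<le> \<epsilon>"
    and mu_small: "\<And>r. 0 \<le> r \<Longrightarrow> lifetime mu - \<rho> < r \<Longrightarrow> dBL (mu r) zeroM \<le> \<epsilon>"
    and nu_close: "\<And>r. s \<le> r \<Longrightarrow> r \<le> s + \<kappa> \<Longrightarrow> dBL (nu r) (nu s) \<le> \<epsilon>"
    and t: "t \<ge> 0"
  shows "dBL (graft nu s mu' t) (graft nu s mu (graft_time_change l s a (lifetime mu') (lifetime mu) \<kappa> t))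
    \<le> 3 * \<epsilon>"
proof -
  define \<sigma> \<sigma>' where "\<sigma> = lifetime mu" and "\<sigma>' = lifetime mu'"
  define lam where "lam = graft_time_change l s a \<sigma>' \<sigma> \<kappa>"
  have \<sigma>: "\<sigma> \<ge> 0" and \<sigma>': "\<sigma>' \<ge> 0" unfolding \<sigma>_def \<sigma>'_def using lifetime_nonneg D0D(2) mu mu' by auto
  have l0: "l 0 = 0" by (rule LamSet_zero[OF l])
  have \<epsilon>: "0 \<le> \<epsilon>" using nu_close[of s] \<kappa> by simp
  have nus: "nu s \<in> MF" by (rule cadlagD(1)[OF nu s])
  have MF: "\<And>r. r \<ge> 0 \<Longrightarrow> mu r \<in> MF" "\<And>r. r \<ge> 0 \<Longrightarrow> mu' r \<in> MF"
    using cadlagD(1) D0D(1) mu mu' by blast+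
  note graft = graft_eq_piecewise[OF nondeg]
  consider "t < s" | "s \<le> t" "t < s + a" | "s + a \<le> t" "t \<le> s + \<sigma>' + \<kappa>" | "s + \<sigma>' + \<kappa> < t"
    by linarith
  then have "dBL (graft nu s mu' t) (graft nu s mu (lam t)) \<le> 3 * \<epsilon>"
  proof cases
    case 1 then show ?thesis using \<epsilon> by (simp add: lam_def graft_time_change_start graft)
  next
    case 2
    have "l (t - s) \<le> l a" using LamSet_mono[OF l, of "t - s" a] 2 by simp
    then have "l (t - s) < \<sigma>" using la(1) 2 unfolding \<sigma>_def by fastforce
    then have "dBL (graft nu s mu' t) (graft nu s mu (lam t)) =
        dBL (graftM (nu s) (mu' (t - s))) (graftM (nu s) (mu (l (t - s))))"
      using 2 a LamSet_nonneg[OF l, of "t - s"]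
      by (simp add: lam_def graft_time_change_inner[of l, OF l0] graft \<sigma>_def \<sigma>'_def)
    also have "\<dots> \<le> \<epsilon>"
      using 2 LamSet_nonneg[OF l, of "t - s"] close[of "t - s"]
      by (intro order_trans[OF dBL_graftM_graftM_le[OF nus MF(2) MF(1)]]) auto
    finally show ?thesis using \<epsilon> by linarith
  next
    case 3
    have "lam (s + a) \<le> lam t" "lam t \<le> lam (s + \<sigma>' + \<kappa>)"
      using LamSet_mono[OF lam[folded \<sigma>_def \<sigma>'_def]] 3 s a unfolding lam_def by auto
    then have "s + l a \<le> lam t" "lam t \<le> s + \<sigma> + \<kappa>"
      using a \<kappa> by (simp_all add: lam_def graft_time_change_inner[of l, OF l0]
          graft_time_change_tail[of l, OF l0 a(1) a(2)[folded \<sigma>'_def] \<kappa>])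
    then show ?thesis
      using 3 by (intro dBL_graft_bridge[OF nondeg nu s mu mu' l a la(2) close mu_small nu_close])
        (auto simp: \<sigma>_def \<sigma>'_def)
  next
    case 4
    have "lam t = t + \<sigma> - \<sigma>'"
      unfolding lam_def using 4 by (intro graft_time_change_tail[of l, OF l0 a(1) a(2)[folded \<sigma>'_def] \<kappa>]) simp
    then show ?thesis using 4 \<epsilon> \<sigma> \<sigma>' a \<kappa> s by (simp add: graft \<sigma>_def \<sigma>'_def)
  qed
  then show ?thesis unfolding lam_def \<sigma>_def \<sigma>'_def .
qed

lemma divide_within_exp_bounds:
  fixes g \<kappa> D N :: real
  assumes \<kappa>: "0 < \<kappa>" "\<kappa> \<le> D" and close: "\<bar>N - D\<bar> \<le> min (1 - exp (- g)) (exp g - 1) * \<kappa>"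
  shows "exp (- g) \<le> N / D" "N / D \<le> exp g"
proof -
  define \<theta> where "\<theta> = min (1 - exp (- g)) (exp g - 1)"
  have "0 \<le> \<theta> * \<kappa>" using close unfolding \<theta>_def by linarith
  then have "\<theta> * \<kappa> \<le> \<theta> * D" using \<kappa> by (intro mult_left_mono) (auto simp: zero_le_mult_iff)
  then have "(1 - \<theta>) * D \<le> N" "N \<le> (1 + \<theta>) * D" using close unfolding \<theta>_def[symmetric]
    by (auto simp: abs_le_iff algebra_simps)
  moreover have "exp (- g) * D \<le> (1 - \<theta>) * D" "(1 + \<theta>) * D \<le> exp g * D"
    using \<kappa> unfolding \<theta>_def by (auto intro!: mult_right_mono)
  ultimately show "exp (- g) \<le> N / D" "N / D \<le> exp g" using \<kappa> by (auto simp: field_simps)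
qed

text \<open>The excursion of the perturbed path is matched by l up to time a: late enough that both
  excursions are almost dead afterwards, early enough that l a stays below the unperturbed
  lifetime.\<close>

lemma graft_junction_point:
  assumes l: "l \<in> LamSet" "gammaL l < d" and d: "d \<le> 1/2" and life: "\<bar>\<sigma>' - \<sigma>\<bar> < d"
    and \<sigma>: "\<sigma> \<ge> 0" "\<sigma>' \<ge> 0" and \<rho>: "\<rho> > 0" "d * (2 * \<sigma> + 3) \<le> \<rho> / 2"
  obtains a where "0 \<le> a" "a \<le> \<sigma>'" "0 < a \<Longrightarrow> l a < \<sigma>" "\<sigma> - \<rho> < l a"
    "\<And>r. 0 \<le> r \<Longrightarrow> r \<le> a \<Longrightarrow> \<bar>l r - r\<bar> \<le> 2 * d * (\<sigma> + 1)"
proof -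
  define a where "a = max 0 (\<sigma>' - \<rho> / 2)"
  have a: "0 \<le> a" "a \<le> \<sigma>'" "a \<le> \<sigma> + 1" unfolding a_def using \<sigma> \<rho> life d by auto
  have dev: "\<bar>l r - r\<bar> \<le> 2 * d * (\<sigma> + 1)" if "0 \<le> r" "r \<le> a" for r
  proof -
    have "\<bar>l r - r\<bar> \<le> 2 * gammaL l * r" using abs_LamSet_minus_id_le[OF l(1) _ that(1)] l(2) d by simp
    also have "\<dots> \<le> 2 * d * (\<sigma> + 1)"
      using l(2) that a(3) gammaL_nonneg[OF l(1)] by (intro mult_mono) auto
    finally show ?thesis .
  qed
  have expand: "2 * d * (\<sigma> + 1) = 2 * (d * \<sigma>) + 2 * d" "d * (2 * \<sigma> + 3) = 2 * (d * \<sigma>) + 3 * d"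
    by (simp_all add: algebra_simps)
  have "\<sigma> - \<rho> < l a \<and> (0 < a \<longrightarrow> l a < \<sigma>)"
  proof (cases "0 < a")
    case True
    then have "a = \<sigma>' - \<rho> / 2" unfolding a_def by simp
    moreover have "l a - a \<le> 2 * (d * \<sigma>) + 2 * d" "a - l a \<le> 2 * (d * \<sigma>) + 2 * d"
      using dev[of a] a expand(1) by (simp_all add: abs_le_iff)
    moreover have "\<sigma>' - \<sigma> < d" "\<sigma> - \<sigma>' < d" using life by (simp_all add: abs_less_iff)
    ultimately show ?thesis using \<rho>(2) expand(2) by linarith
  next
    case False
    then have "a = 0" "\<sigma>' \<le> \<rho> / 2" using a(1) unfolding a_def by auto
    moreover have "d \<le> d * (2 * \<sigma> + 3)" using l(2) gammaL_nonneg[OF l(1)] \<sigma> by simp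
    ultimately show ?thesis using LamSet_zero[OF l(1)] life \<rho> by simp
  qed
  then show ?thesis using that a(1,2) dev by blast
qed

lemma graft_time_change_admissible:
  assumes l: "l \<in> LamSet" "gammaL l \<le> g" and s: "s \<ge> 0" and \<kappa>: "\<kappa> > 0"
    and a: "0 \<le> a" "a \<le> \<sigma>'" and l_dev: "\<And>r. 0 \<le> r \<Longrightarrow> r \<le> a \<Longrightarrow> \<bar>l r - r\<bar> \<le> \<delta>1"
    and life: "\<bar>\<sigma> - \<sigma>'\<bar> \<le> \<delta>2"
    and small: "\<delta>1 + \<delta>2 \<le> min (1 - exp (- g)) (exp g - 1) * \<kappa>" "\<delta>1 + \<delta>2 \<le> \<eta>"
  shows "graft_time_change l s a \<sigma>' \<sigma> \<kappa> \<in> LamSet" "gammaL (graft_time_change l s a \<sigma>' \<sigma> \<kappa>) \<le> g"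
    "\<And>t. t \<ge> 0 \<Longrightarrow> \<bar>graft_time_change l s a \<sigma>' \<sigma> \<kappa> t - t\<bar> \<le> \<eta>"
proof -
  have "\<delta>1 \<ge> 0" "\<delta>2 \<ge> 0" using l_dev[of 0] life a by auto
  have "\<bar>(\<sigma> + \<kappa> - l a) - (\<sigma>' + \<kappa> - a)\<bar> \<le> min (1 - exp (- g)) (exp g - 1) * \<kappa>"
    using l_dev[of a] a life small(1) by (simp add: abs_le_iff)
  then have "exp (- g) \<le> (\<sigma> + \<kappa> - l a) / (\<sigma>' + \<kappa> - a)" "(\<sigma> + \<kappa> - l a) / (\<sigma>' + \<kappa> - a) \<le> exp g"
    using divide_within_exp_bounds[of \<kappa> "\<sigma>' + \<kappa> - a"] \<kappa> a by auto
  then show "graft_time_change l s a \<sigma>' \<sigma> \<kappa> \<in> LamSet" "gammaL (graft_time_change l s a \<sigma>' \<sigma> \<kappa>) \<le> g"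
    using graft_time_change_LamSet[OF l s a \<kappa>] by auto
  show "\<bar>graft_time_change l s a \<sigma>' \<sigma> \<kappa> t - t\<bar> \<le> \<eta>" for t
    using abs_graft_time_change_minus_le[where l=l and a=a and \<sigma>'=\<sigma>' and \<kappa>=\<kappa> and \<delta>="\<delta>1 + \<delta>2"
        and \<sigma>=\<sigma> and s=s and t=t, OF LamSet_zero[OF l(1)] a \<kappa>]
      l_dev life \<open>\<delta>1 \<ge> 0\<close> \<open>\<delta>2 \<ge> 0\<close> small(2) by fastforce
qed

lemma graft_time_change_close:
  assumes nondeg: "\<not> (deadset nu \<noteq> {} \<and> lifetime nu \<le> s)" and nu: "nu \<in> cadlag" and s: "s \<ge> 0"
    and mu: "mu \<in> D0" and mu': "mu' \<in> D0"
    and l: "l \<in> LamSet" "gammaL l < d" "\<bar>lifetime mu' - lifetime mu\<bar> < d"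
      "\<And>r. 0 \<le> r \<Longrightarrow> dBL (mu' r) (mu (l r)) \<le> \<epsilon>"
    and d: "d \<le> 1/2" "d \<le> g" "d * (2 * lifetime mu + 3) \<le> \<rho> / 2"
      "d * (2 * lifetime mu + 3) \<le> min (1 - exp (- g)) (exp g - 1) * \<kappa>" "d * (2 * lifetime mu + 3) \<le> \<eta>"
    and \<rho>: "\<rho> > 0" "\<And>r. 0 \<le> r \<Longrightarrow> lifetime mu - \<rho> < r \<Longrightarrow> dBL (mu r) zeroM \<le> \<epsilon>"
    and \<kappa>: "\<kappa> > 0" "\<And>r. s \<le> r \<Longrightarrow> r \<le> s + \<kappa> \<Longrightarrow> dBL (nu r) (nu s) \<le> \<epsilon>"
  obtains lam where "lam \<in> LamSet" "gammaL lam \<le> g" "\<And>t. t \<ge> 0 \<Longrightarrow> \<bar>lam t - t\<bar> \<le> \<eta>"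
    "\<And>t. t \<ge> 0 \<Longrightarrow> dBL (graft nu s mu' t) (graft nu s mu (lam t)) \<le> 3 * \<epsilon>"
proof -
  define \<sigma> \<sigma>' where "\<sigma> = lifetime mu" and "\<sigma>' = lifetime mu'"
  have \<sigma>: "\<sigma> \<ge> 0" "\<sigma>' \<ge> 0" unfolding \<sigma>_def \<sigma>'_def using lifetime_nonneg D0D(2) mu mu' by auto
  obtain a where a: "0 \<le> a" "a \<le> \<sigma>'" "0 < a \<Longrightarrow> l a < \<sigma>" "\<sigma> - \<rho> < l a"
    "\<And>r. 0 \<le> r \<Longrightarrow> r \<le> a \<Longrightarrow> \<bar>l r - r\<bar> \<le> 2 * d * (\<sigma> + 1)"
    using graft_junction_point[OF l(1,2) d(1) l(3)[folded \<sigma>_def \<sigma>'_def] \<sigma> \<rho>(1)] d(3)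
    unfolding \<sigma>_def by blast
  define lam where "lam = graft_time_change l s a \<sigma>' \<sigma> \<kappa>"
  have "2 * d * (\<sigma> + 1) + d = d * (2 * \<sigma> + 3)" by (simp add: algebra_simps)
  then have lam: "lam \<in> LamSet" "gammaL lam \<le> g" "\<And>t. t \<ge> 0 \<Longrightarrow> \<bar>lam t - t\<bar> \<le> \<eta>"
    using graft_time_change_admissible[OF l(1) _ s \<kappa>(1) a(1,2) a(5), of g \<sigma> d \<eta>] l d
    unfolding lam_def \<sigma>_def \<sigma>'_def by (auto simp: abs_minus_commute)
  moreover have "dBL (graft nu s mu' t) (graft nu s mu (lam t)) \<le> 3 * \<epsilon>" if "t \<ge> 0" for t
    unfolding lam_def \<sigma>_def \<sigma>'_def
    by (rule dBL_graft_graft_time_change[OF nondeg nu s mu mu' l(1) _ _ \<kappa>(1) _ _ _ l(4) \<rho>(2) \<kappa>(2) that])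
      (use a lam(1) in \<open>auto simp: \<sigma>_def \<sigma>'_def lam_def\<close>)
  ultimately show ?thesis using that by blast
qed

lemma graft_continuous:
  assumes nondeg: "\<not> (deadset nu \<noteq> {} \<and> lifetime nu \<le> s)" and nu: "nu \<in> cadlag" and s: "s \<ge> 0"
    and mu: "mu \<in> D0" and e: "e > 0"
  shows "\<exists>d>0. \<forall>mu'\<in>D0. d0 mu' mu < d \<longrightarrow> dS (graft nu s mu') (graft nu s mu) < e"
proof -
  define \<epsilon> where "\<epsilon> = e / 12"
  have \<epsilon>: "\<epsilon> > 0" unfolding \<epsilon>_def using e by simp
  obtain \<eta> where \<eta>: "\<eta> > 0"
    "\<And>X l. (\<And>t. t \<ge> 0 \<Longrightarrow> X t \<in> MF) \<Longrightarrow> l \<in> LamSet \<Longrightarrow> gammaL l < e \<Longrightarrow>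
       (\<And>t. t \<ge> 0 \<Longrightarrow> \<bar>l t - t\<bar> \<le> \<eta>) \<Longrightarrow> (\<And>t. t \<ge> 0 \<Longrightarrow> dBL (X t) (graft nu s mu (l t)) \<le> e / 4) \<Longrightarrow>
       dS X (graft nu s mu) < e"
    using dS_less_if_close[OF graft_cadlag[OF nu s mu nondeg] e] by blast
  obtain \<rho> where \<rho>: "\<rho> > 0" "\<And>r. 0 \<le> r \<Longrightarrow> lifetime mu - \<rho> < r \<Longrightarrow> dBL (mu r) zeroM < \<epsilon>"
    using dBL_zeroM_near_lifetime[OF mu \<epsilon>] by blast
  obtain \<kappa>0 where \<kappa>0: "\<kappa>0 > 0" "\<forall>r. s \<le> r \<and> r < s + \<kappa>0 \<longrightarrow> dBL (nu r) (nu s) < \<epsilon>"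
    using right_cont_atD[OF cadlagD(2)[OF nu s] \<epsilon>] by blast
  define g \<kappa> K where "g = e / 2" and "\<kappa> = \<kappa>0 / 2" and "K = 2 * lifetime mu + 3"
  define \<theta> where "\<theta> = min (1 - exp (- g)) (exp g - 1)"
  define d where "d = min (1/2) (min g (min (\<rho> / 2 / K) (min (\<theta> * \<kappa> / K) (min (\<eta> / K) \<epsilon>))))"
  have pos: "g > 0" "\<theta> > 0" "\<kappa> > 0" "K > 0"
    unfolding g_def \<theta>_def \<kappa>_def K_def using e \<kappa>0(1) lifetime_nonneg[OF D0D(2)[OF mu]] by auto
  have "d \<le> \<rho> / 2 / K" "d \<le> \<theta> * \<kappa> / K" "d \<le> \<eta> / K" "d \<le> 1/2" "d \<le> g" "d \<le> \<epsilon>"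
    unfolding d_def by (simp_all only: min_le_iff_disj order_refl simp_thms)
  then have d: "d \<le> 1/2" "d \<le> g" "d * K \<le> \<rho> / 2" "d * K \<le> \<theta> * \<kappa>" "d * K \<le> \<eta>" "d \<le> \<epsilon>"
    using pos(4) by (simp_all add: pos_le_divide_eq)
  have "0 < d" unfolding d_def using pos \<rho> \<eta> \<epsilon> by simp
  then obtain d' where d': "d' > 0" "\<And>mu'. mu' \<in> D0 \<Longrightarrow> d0 mu' mu < d' \<Longrightarrow> \<exists>l\<in>LamSet. gammaL l < d \<and>
      \<bar>lifetime mu' - lifetime mu\<bar> < d \<and> (\<forall>r\<ge>0. dBL (mu' r) (mu (l r)) \<le> d)"
    using d0_close_time_change[OF mu] by blast
  show ?thesis
  proof (intro exI[of _ d'] conjI ballI impI d'(1))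
    fix mu' assume mu': "mu' \<in> D0" "d0 mu' mu < d'"
    obtain l where l: "l \<in> LamSet" "gammaL l < d" "\<bar>lifetime mu' - lifetime mu\<bar> < d"
      "\<And>r. 0 \<le> r \<Longrightarrow> dBL (mu' r) (mu (l r)) \<le> \<epsilon>"
      using d'(2)[OF mu'] d(6) by fastforce
    obtain lam where lam: "lam \<in> LamSet" "gammaL lam \<le> g" "\<And>t. t \<ge> 0 \<Longrightarrow> \<bar>lam t - t\<bar> \<le> \<eta>"
      "\<And>t. t \<ge> 0 \<Longrightarrow> dBL (graft nu s mu' t) (graft nu s mu (lam t)) \<le> 3 * \<epsilon>"
      by (rule graft_time_change_close[OF nondeg nu s mu mu'(1) l d(1,2) _ _ _ \<rho>(1) _ pos(3)])
        (use d \<rho> \<kappa>0 in \<open>auto simp: K_def \<theta>_def \<kappa>_def less_imp_le\<close>)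
    have "gammaL lam < e" using lam(2) e unfolding g_def by simp
    moreover have "dBL (graft nu s mu' t) (graft nu s mu (lam t)) \<le> e / 4" if "t \<ge> 0" for t
      using lam(4)[OF that] unfolding \<epsilon>_def by simp
    ultimately show "dS (graft nu s mu') (graft nu s mu) < e"
      by (intro \<eta>(2)[OF graft_in_MF[OF nondeg nu s mu'(1)] lam(1) _ lam(3)])
  qed
qed

theorem lemma5p4:
  fixes nu :: "real \<Rightarrow> real measure" and s :: real
  assumes "nu \<in> cadlag" and "s > 0"
  shows "(\<forall>mu\<in>D0. graft nu s mu \<in> cadlag) \<and>
         (\<forall>mu\<in>D0. \<forall>e>0. \<exists>d>0. \<forall>mu'\<in>D0. d0 mu' mu < d \<longrightarrow>
              dS (graft nu s mu') (graft nu s mu) < e)"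
proof (cases "deadset nu \<noteq> {} \<and> lifetime nu \<le> s")
  case True
  then have "graft nu s mu = nu" for mu unfolding graft_def by simp
  then show ?thesis using assms(1) dS_self[of nu] by (auto intro!: exI[of _ 1])
next
  case False
  have "s \<ge> 0" using assms(2) by simp
  then show ?thesis using graft_cadlag[OF assms(1)] graft_continuous[OF False assms(1)] False by blast
qed

end
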